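(* Let $q$ be a prime power, $C\subseteq\mathbb{F}_q^{2n}$ a symplectic self-orthogonal $\mathbb{F}_q$-linear code with stabilizer code $Q(C)\subseteq\mathbb{C}^{q^n}$, and let $\emptyset\neq I\subsetneq J\subseteq\{1,\dots,n\}$. Then $Q(C)$ is $(I,J)$-locally recoverable if and only if \[\sigma_I\left[\pi_J\left(C^{\perp_s}\right)\right]=\sigma_I(C).\]
   Context: $q$ is a power of a prime $p$. Vectors of $\mathbb{F}_q^{2n}$ are written $(\mathbf a|\mathbf b)$, $\mathbf a,\mathbf b\in\mathbb F_q^n$, coordinate pair $(a_j,b_j)$ indexed by $j\in\{1,\dots,n\}$. Symplectic form: $(\mathbf a|\mathbf b)\cdot_s(\mathbf c|\mathbf d)=\mathbf a\cdot\mathbf d-\mathbf b\cdot\mathbf c$; $C^{\perp_s}$ is the dual; $C$ is symplectic self-orthogonal if $C\subseteq C^{\perp_s}$. For $R\subseteq\{1,\dots,n\}$: $\pi_R(\mathbf a|\mathbf b)=(a_j|b_j)_{j\in R}$, puncturing $\pi_R(D)=\{\pi_R(\mathbf y):\mathbf y\in D\}$, shortening $\sigma_R(D)=\{\pi_R(\mathbf y):\mathbf y=(\mathbf a|\mathbf b)\in D,\ \mathrm{supp}(\mathbf a)\cup\mathrm{supp}(\mathbf b)\subseteq R\}$ (the set indicates the coordinates kept); the shortening at $I$ of a code with coordinate pairs indexed by $J\supseteq I$ is defined the same way. Quantum setting: $\xi=e^{2\pi\iota/p}$; on $\mathbb C^q$ with basis indexed by $\mathbb F_q$, $X(a)|x\rangle=|x+a\rangle$,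 $Z(b)|x\rangle=\xi^{\mathrm{tr}_{q/p}(bx)}|x\rangle$; $E_{(\mathbf a,\mathbf b)}=\bigotimes_jX(a_j)Z(b_j)$. $Q(C)$ is the common eigenspace $\{v:Ev=\lambda(E)v\ \forall E\in S\}$, $S$ the commutative group generated by scalars $\xi^\ell\mathcal I$ and the $E_{\mathbf y}$, $\mathbf y\in C$, $\lambda$ a character of $S$ with $\lambda(\xi\mathcal I)=\xi$. Let $\Gamma(\rho)=q^{-2}\sum_{a,b\in\mathbb F_q}X(a)Z(b)\rho(X(a)Z(b))^\dagger$ and $\Gamma^I$ apply $\Gamma$ to the qudits indexed by $I$ and the identity elsewhere. For $\emptyset\ne I\subsetneq J$, a code $Q$ is $(I,J)$-locally recoverable if there is a trace-preserving quantum operation $\mathcal R$ acting only on the qudits indexed by $J$ (identity on the others) with $\mathcal R\circ\Gamma^I(|\varphi\rangle\langle\varphi|)=|\varphi\rangle\langle\varphi|$ for all $|\varphi\rangle\in Q$. *)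

theory Defs
  imports Complex_Main
begin

text \<open>
  The field F_q is a finite field type 'q (q = card (UNIV :: 'q set), p = CHAR('q)).
  The coordinate index set {1,...,n} is a finite type 'n (so J \<subseteq> {1..n} means J :: 'n set).
  A vector (a|b) of F_q^{2n} is a pair of functions 'n \<Rightarrow> 'q.
  Punctured / shortened vectors are represented by zero-padding outside the kept coordinates.
  Vectors of C^{q^n} are functions ('n \<Rightarrow> 'q) \<Rightarrow> complex (basis indexed by F_q^n);
  operators are matrices ('n \<Rightarrow> 'q) \<Rightarrow> ('n \<Rightarrow> 'q) \<Rightarrow> complex  (row, column).
\<close>

type_synonym ('n, 'q) svec = "('n \<Rightarrow> 'q) \<times> ('n \<Rightarrow> 'q)"
type_synonym ('n, 'q) qmat = "('n \<Rightarrow> 'q) \<Rightarrow> ('n \<Rightarrow> 'q) \<Rightarrow> complex"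
type_synonym ('n, 'q) qvec = "('n \<Rightarrow> 'q) \<Rightarrow> complex"

definition sadd :: "('n, 'q::field) svec \<Rightarrow> ('n, 'q) svec \<Rightarrow> ('n, 'q) svec" where
  "sadd u v = (\<lambda>j. fst u j + fst v j, \<lambda>j. snd u j + snd v j)"

definition sscale :: "'q::field \<Rightarrow> ('n, 'q) svec \<Rightarrow> ('n, 'q) svec" where
  "sscale c u = (\<lambda>j. c * fst u j, \<lambda>j. c * snd u j)"

definition linear_code :: "('n, 'q::field) svec set \<Rightarrow> bool" where
  "linear_code C \<longleftrightarrow> (\<lambda>_. 0, \<lambda>_. 0) \<in> C \<and> (\<forall>u\<in>C. \<forall>v\<in>C. sadd u v \<in> C)
     \<and> (\<forall>c. \<forall>u\<in>C. sscale c u \<in> C)"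

definition symp :: "('n::finite, 'q::field) svec \<Rightarrow> ('n, 'q) svec \<Rightarrow> 'q" where
  "symp u v = (\<Sum>j\<in>UNIV. fst u j * snd v j) - (\<Sum>j\<in>UNIV. snd u j * fst v j)"

definition sdual :: "('n::finite, 'q::field) svec set \<Rightarrow> ('n, 'q) svec set" where
  "sdual C = {v. \<forall>c\<in>C. symp v c = 0}"

definition symp_self_orth :: "('n::finite, 'q::field) svec set \<Rightarrow> bool" where
  "symp_self_orth C \<longleftrightarrow> C \<subseteq> sdual C"

definition ssupp :: "('n, 'q::zero) svec \<Rightarrow> 'n set" where
  "ssupp y = {j. fst y j \<noteq> 0} \<union> {j. snd y j \<noteq> 0}"

definition proj :: "'n set \<Rightarrow> ('n, 'q::zero) svec \<Rightarrow> ('n, 'q) svec" where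
  "proj R y = (\<lambda>j. if j \<in> R then fst y j else 0, \<lambda>j. if j \<in> R then snd y j else 0)"

definition puncture :: "'n set \<Rightarrow> ('n, 'q::zero) svec set \<Rightarrow> ('n, 'q) svec set" where
  "puncture R D = proj R ` D"

definition shorten :: "'n set \<Rightarrow> ('n, 'q::zero) svec set \<Rightarrow> ('n, 'q) svec set" where
  "shorten R D = proj R ` {y \<in> D. ssupp y \<subseteq> R}"

definition fdeg :: "'q::{finite,field} itself \<Rightarrow> nat" where
  "fdeg _ = (LEAST m. m > 0 \<and> card (UNIV :: 'q set) = CHAR('q) ^ m)"

text \<open>tr_{q/p}(x) = sum_{i<m} x^(p^i), q = p^m; its value lies in the prime field.\<close>
definition ftrace :: "'q::{finite,field} \<Rightarrow> 'q" where
  "ftrace x = (\<Sum>i<fdeg TYPE('q). x ^ (CHAR('q) ^ i))"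

definition xi :: "'q::{finite,field} itself \<Rightarrow> complex" where
  "xi _ = cis (2 * pi / real CHAR('q))"

text \<open>chi t = xi ^ tr(t), the element tr(t) of F_p read as an integer in {0..p-1}.\<close>
definition chi :: "'q::{finite,field} \<Rightarrow> complex" where
  "chi t = xi TYPE('q) ^ (THE k. k < CHAR('q) \<and> of_nat k = ftrace t)"

definition mmul :: "('n::finite, 'q::finite) qmat \<Rightarrow> ('n, 'q) qmat \<Rightarrow> ('n, 'q) qmat" where
  "mmul A B = (\<lambda>x y. \<Sum>z\<in>UNIV. A x z * B z y)"

definition mapply :: "('n::finite, 'q::finite) qmat \<Rightarrow> ('n, 'q) qvec \<Rightarrow> ('n, 'q) qvec" where
  "mapply A v = (\<lambda>x. \<Sum>y\<in>UNIV. A x y * v y)"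

definition madj :: "('n, 'q) qmat \<Rightarrow> ('n, 'q) qmat" where
  "madj A = (\<lambda>x y. cnj (A y x))"

definition mid :: "('n, 'q) qmat" where
  "mid = (\<lambda>x y. if x = y then 1 else 0)"

definition mscale :: "complex \<Rightarrow> ('n, 'q) qmat \<Rightarrow> ('n, 'q) qmat" where
  "mscale c A = (\<lambda>x y. c * A x y)"

definition mtrace :: "('n::finite, 'q::finite) qmat \<Rightarrow> complex" where
  "mtrace A = (\<Sum>x\<in>UNIV. A x x)"

definition ketbra :: "('n, 'q) qvec \<Rightarrow> ('n, 'q) qmat" where
  "ketbra v = (\<lambda>x y. v x * cnj (v y))"

text \<open>E_(a,b) = tensor_j X(a_j) Z(b_j):  E|x> = xi^{tr(sum_j b_j x_j)} |x + a>.\<close>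
definition pauliE :: "('n::finite, 'q::{finite,field}) svec \<Rightarrow> ('n, 'q) qmat" where
  "pauliE y = (\<lambda>x' x. if x' = (\<lambda>j. x j + fst y j)
                      then chi (\<Sum>j\<in>UNIV. snd y j * x j) else 0)"

inductive_set stab_group :: "('n::finite, 'q::{finite,field}) svec set \<Rightarrow> ('n, 'q) qmat set"
  for C where
    scalar: "mscale (xi TYPE('q) ^ l) mid \<in> stab_group C"
  | gen: "y \<in> C \<Longrightarrow> pauliE y \<in> stab_group C"
  | mult: "A \<in> stab_group C \<Longrightarrow> B \<in> stab_group C \<Longrightarrow> mmul A B \<in> stab_group C"

definition stab_character ::
  "('n::finite, 'q::{finite,field}) svec set \<Rightarrow> (('n, 'q) qmat \<Rightarrow> complex) \<Rightarrow> bool" where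
  "stab_character C lam \<longleftrightarrow>
     (\<forall>A\<in>stab_group C. \<forall>B\<in>stab_group C. lam (mmul A B) = lam A * lam B)
     \<and> (\<forall>A\<in>stab_group C. lam A \<noteq> 0)
     \<and> lam (mscale (xi TYPE('q)) mid) = xi TYPE('q)"

definition stab_code ::
  "('n::finite, 'q::{finite,field}) svec set \<Rightarrow> (('n, 'q) qmat \<Rightarrow> complex) \<Rightarrow> ('n, 'q) qvec set" where
  "stab_code C lam = {v. \<forall>E\<in>stab_group C. mapply E v = (\<lambda>x. lam E * v x)}"

text \<open>Gamma^I(rho) = q^{-2|I|} sum_{a,b supported in I} E_(a,b) rho E_(a,b)^dagger
  (the tensor product of Gamma on the qudits in I and the identity elsewhere).\<close>
definition Gamma ::
  "'n set \<Rightarrow> ('n::finite, 'q::{finite,field}) qmat \<Rightarrow> ('n, 'q) qmat" where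
  "Gamma I rho = mscale (1 / of_nat (card (UNIV :: 'q set) ^ (2 * card I)))
     (\<lambda>x y. \<Sum>e\<in>{e :: ('n, 'q) svec. ssupp e \<subseteq> I}.
        mmul (mmul (pauliE e) rho) (madj (pauliE e)) x y)"

definition restr :: "'n set \<Rightarrow> ('n \<Rightarrow> 'q::zero) \<Rightarrow> ('n \<Rightarrow> 'q)" where
  "restr J x = (\<lambda>j. if j \<in> J then x j else 0)"

text \<open>A \<otimes> identity, where A is an operator on the qudits in J (only its entries on
  configurations supported in J matter).\<close>
definition lift_op :: "'n set \<Rightarrow> ('n, 'q::zero) qmat \<Rightarrow> ('n, 'q) qmat" where
  "lift_op J A = (\<lambda>x y. if (\<forall>j. j \<notin> J \<longrightarrow> x j = y j) then A (restr J x) (restr J y) else 0)"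

definition kraus_map :: "'n set \<Rightarrow> ('n::finite, 'q::{finite,zero}) qmat list \<Rightarrow> ('n, 'q) qmat \<Rightarrow> ('n, 'q) qmat" where
  "kraus_map J As rho = (\<lambda>x y. \<Sum>A\<leftarrow>As.
      mmul (mmul (lift_op J A) rho) (madj (lift_op J A)) x y)"

definition locally_recoverable ::
  "'n set \<Rightarrow> 'n set \<Rightarrow> ('n::finite, 'q::{finite,field}) qvec set \<Rightarrow> bool" where
  "locally_recoverable I J Q \<longleftrightarrow>
     (\<exists>As. (\<forall>rho. mtrace (kraus_map J As rho) = mtrace rho)
       \<and> (\<forall>\<phi>\<in>Q. kraus_map J As (Gamma I (ketbra \<phi>)) = ketbra \<phi>))"

end

theory Submission
  imports Defs "HOL-Number_Theory.Cong" "HOL-Computational_Algebra.Polynomial" "HOL-Library.FuncSet"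
begin

text \<open>Both sides are equivalent to the inclusion sdual_on I (C \<inter> supported J) \<subseteq> C: every
  error supported on I that commutes with all stabilizers supported on J is itself a stabilizer.

  Counting with the additive character shows that puncturing the symplectic dual of C at J gives
  the dual, within J, of the subcode of C supported on J; so the shortening identity says exactly
  this inclusion, the reverse inclusion being self-orthogonality.

  If the inclusion holds, an explicit recovery acting on J works: for every error e on I undo e
  and project onto the code of the stabilizers supported on J, and complete these Kraus operators
  by the projection onto the complement of the code of the stabilizers supported on J - I.
  Errors that are not stabilizers are annihilated by the projection, the others act trivially.

  Conversely, let a recovery exist and let y be in the dual of C, vanishing on J - I. The part of
  the Pauli operator of y on I is absorbed by the depolarizing channel, the part outside J
  commutes with the recovery, and the whole operator maps the code into itself; hence the part on
  I preserves every projection onto a code vector. By polarization it acts on the code as a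
  scalar, and comparing traces against the code projection shows that it is a stabilizer.\<close>

section \<open>Finite fields and the additive character\<close>

lemma finite_field_CHAR_pos: "CHAR('q::{finite,field}) > 0"
  by (rule finite_imp_CHAR_pos) simp

lemma finite_field_CHAR_prime: "prime CHAR('q::{finite,field})"
  using finite_field_CHAR_pos by (rule prime_CHAR_semidom)

definition add_closed :: "'a::monoid_add set \<Rightarrow> bool" where
  "add_closed W \<longleftrightarrow> 0 \<in> W \<and> (\<forall>a\<in>W. \<forall>b\<in>W. a + b \<in> W)"

lemma of_nat_mult_mem_add_closed:
  fixes W :: "'a::semiring_1 set"
  assumes "add_closed W" "y \<in> W"
  shows "of_nat n * y \<in> W"
  using assms by (induction n) (auto simp: add_closed_def distrib_right)

lemma uminus_mem_add_closed:
  fixes W :: "'a::ring_1 set"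
  assumes "CHAR('a) > 0" "add_closed W" "y \<in> W"
  shows "- y \<in> W"
proof -
  have "of_nat (CHAR('a) - 1) + (1::'a) = 0"
    using assms(1) by (metis Suc_pred' add.commute of_nat_CHAR of_nat_Suc)
  then have "of_nat (CHAR('a) - 1) = (-1::'a)"
    by (simp add: eq_neg_iff_add_eq_0)
  with of_nat_mult_mem_add_closed[OF assms(2,3), of "CHAR('a) - 1"] show ?thesis
    by simp
qed

lemma mem_add_closed_of_nat_mult_mem:
  fixes W :: "'q::{finite,field} set"
  assumes "add_closed W" "of_nat k * x \<in> W" "\<not> CHAR('q) dvd k"
  shows "x \<in> W"
proof -
  have "coprime k CHAR('q)"
    using assms(3) finite_field_CHAR_prime[where 'q='q] by (metis coprime_commute prime_imp_coprime)
  then obtain n where "[k * n = 1] (mod CHAR('q))"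
    using cong_solve_coprime_nat by auto
  then have "of_nat n * of_nat k = (1::'q)"
    by (simp add: of_nat_eq_iff_cong_CHAR[symmetric] mult.commute)
  then have "x = of_nat n * (of_nat k * x)"
    by (simp add: mult.assoc[symmetric])
  with of_nat_mult_mem_add_closed[OF assms(1,2), of n] show ?thesis
    by simp
qed

lemma inj_on_add_of_nat_mult:
  fixes W :: "'q::{finite,field} set"
  assumes W: "add_closed W" and x: "x \<notin> W"
  shows "inj_on (\<lambda>(w, k). w + of_nat k * x) (W \<times> {..<CHAR('q)})"
proof (rule inj_onI, clarify)
  define p where "p = CHAR('q)"
  fix w k w' k'
  assume w: "w \<in> W" "k < CHAR('q)" "w' \<in> W" "k' < CHAR('q)"
    and eq: "w + of_nat k * x = w' + of_nat k' * x"
  have "of_nat (k + (p - k')) * x = w' + - w"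
    using eq w(4) by (simp add: p_def of_nat_diff algebra_simps)
  also have "\<dots> \<in> W"
    using uminus_mem_add_closed[OF finite_field_CHAR_pos W w(1)] w(3) W unfolding add_closed_def by blast
  finally have "p dvd k + (p - k')"
    using mem_add_closed_of_nat_mult_mem[OF W] x unfolding p_def by blast
  then obtain c where c: "k + (p - k') = p * c" ..
  have "p * c < p * 2" "p * 0 < p * c"
    using w(2,4) c unfolding p_def by linarith+
  then have "c = 1"
    by (simp only: mult_less_cancel1) linarith
  with c w(4) have "k = k'"
    unfolding p_def by simp
  with eq show "w = w' \<and> k = k'"
    by simp
qed

text \<open>Adjoining the multiples of one new element to an additive subgroup multiplies its size by
  the characteristic; iterating this shows that the field has prime-power order.\<close>

lemma add_closed_extend:
  fixes W :: "'q::{finite,field} set"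
  assumes W: "add_closed W" and x: "x \<notin> W"
  shows "\<exists>W' :: 'q set. add_closed W' \<and> card W' = card W * CHAR('q)"
proof -
  define p where "p = CHAR('q)"
  define f :: "'q \<times> nat \<Rightarrow> 'q" where "f = (\<lambda>(w, k). w + of_nat k * x)"
  have p: "p > 0"
    using finite_field_CHAR_pos by (auto simp: p_def)
  have card: "card (f ` (W \<times> {..<p})) = card W * p"
    using inj_on_add_of_nat_mult[OF W x] by (simp add: card_image card_cartesian_product f_def p_def)
  have "0 \<in> f ` (W \<times> {..<p})"
    using W p by (intro image_eqI[of _ _ "(0, 0)"]) (auto simp: f_def add_closed_def)
  moreover have "a + b \<in> f ` (W \<times> {..<p})"
    if a: "a \<in> f ` (W \<times> {..<p})" and b: "b \<in> f ` (W \<times> {..<p})" for a b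
  proof -
    obtain w k w' k' where ab: "w \<in> W" "k < p" "w' \<in> W" "k' < p" "a = f (w, k)" "b = f (w', k')"
      using a b by (elim imageE SigmaE) simp
    have "of_nat ((k + k') mod p) = (of_nat (k + k') :: 'q)"
      unfolding p_def by (simp only: of_nat_eq_iff_cong_CHAR) (simp add: cong_def)
    then have "a + b = f (w + w', (k + k') mod p)"
      using ab by (simp add: f_def algebra_simps)
    moreover have "(w + w', (k + k') mod p) \<in> W \<times> {..<p}"
      using ab W p by (simp add: add_closed_def)
    ultimately show ?thesis
      by (rule image_eqI)
  qed
  ultimately have "add_closed (f ` (W \<times> {..<p}))"
    unfolding add_closed_def by blast
  with card show ?thesis
    unfolding p_def by blast
qed

lemma card_UNIV_eq_card_add_closed_mult_CHAR_power:
  fixes W :: "'q::{finite,field} set"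
  assumes "add_closed W"
  shows "\<exists>m. card (UNIV :: 'q set) = card W * CHAR('q) ^ m"
  using assms
proof (induction "card (UNIV :: 'q set) - card W" arbitrary: W rule: less_induct)
  case less
  show ?case
  proof (cases "W = UNIV")
    case False
    then obtain x where "x \<notin> W"
      by auto
    with less.prems obtain W' :: "'q set" where W': "add_closed W'" "card W' = card W * CHAR('q)"
      using add_closed_extend by blast
    have "card W > 0"
      using less.prems by (auto simp: card_gt_0_iff add_closed_def)
    then have "card W < card W'"
      using W'(2) prime_gt_1_nat[OF finite_field_CHAR_prime[where 'q='q]] by simp
    moreover have "card W' \<le> card (UNIV :: 'q set)"
      by (simp add: card_mono)
    ultimately obtain m where "card (UNIV :: 'q set) = card W' * CHAR('q) ^ m"
      using less.hyps[OF _ W'(1)] by fastforce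
    then show ?thesis
      using W'(2) by (metis mult.assoc power_Suc)
  qed (auto intro: exI[of _ 0])
qed

lemma card_UNIV_eq_CHAR_power: "\<exists>m>0. card (UNIV :: 'q::{finite,field} set) = CHAR('q) ^ m"
proof -
  obtain m where m: "card (UNIV :: 'q set) = CHAR('q) ^ m"
    using card_UNIV_eq_card_add_closed_mult_CHAR_power[of "{0::'q}"] by (auto simp: add_closed_def)
  have "card {0::'q, 1} \<le> card (UNIV :: 'q set)"
    by (rule card_mono) auto
  then have "m \<noteq> 0"
    using m by (cases "m = 0") auto
  with m show ?thesis
    by blast
qed

lemma fdeg_pos: "fdeg TYPE('q::{finite,field}) > 0"
  and card_UNIV_eq_CHAR_power_fdeg: "card (UNIV :: 'q set) = CHAR('q) ^ fdeg TYPE('q)"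
  using LeastI_ex[OF card_UNIV_eq_CHAR_power[where 'q='q]] by (simp_all add: fdeg_def)

lemma power_card_UNIV_eq_self: "(x::'q::{finite,field}) ^ card (UNIV :: 'q set) = x"
proof (cases "x = 0")
  case False
  have "(\<Prod>y\<in>UNIV-{0}. x * y) = (\<Prod>y\<in>UNIV-{0}. y)"
    by (rule prod.reindex_bij_witness[of _ "\<lambda>y. y / x" "\<lambda>y. x * y"]) (use False in auto)
  then have "x ^ (card (UNIV :: 'q set) - 1) = 1"
    by (simp add: prod.distrib)
  then have "x * x ^ (card (UNIV :: 'q set) - 1) = x"
    by simp
  then show ?thesis
    using finite_UNIV_card_ge_0[where 'a='q] by (metis Suc_diff_1 finite power_Suc)
qed (simp add: finite_UNIV_card_ge_0)

lemma ftrace_add: "ftrace (x + y) = ftrace x + ftrace (y::'q::{finite,field})"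
  unfolding ftrace_def by (simp add: freshmans_dream'[OF finite_field_CHAR_prime refl] sum.distrib)

lemma ftrace_power_CHAR: "ftrace (x::'q::{finite,field}) ^ CHAR('q) = ftrace x"
proof -
  define m where "m = fdeg TYPE('q)"
  define p where "p = CHAR('q)"
  have "ftrace x ^ p = (\<Sum>i<m. (x ^ (p ^ i)) ^ p)"
    unfolding ftrace_def m_def p_def by (rule freshmans_dream_sum[OF finite_field_CHAR_prime refl])
  also have "\<dots> = (\<Sum>i<m. x ^ (p ^ Suc i))"
    by (simp add: power_mult[symmetric] mult.commute)
  also have "\<dots> = (\<Sum>i<m. x ^ (p ^ i))"
  proof -
    have "x ^ (p ^ m) = x"
      using power_card_UNIV_eq_self[of x] card_UNIV_eq_CHAR_power_fdeg[where 'q='q]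
      by (simp add: m_def p_def)
    then have "(\<Sum>i<Suc m. x ^ (p ^ i)) = (\<Sum>i<m. x ^ (p ^ i)) + x"
      by (simp only: sum.lessThan_Suc)
    moreover have "(\<Sum>i<Suc m. x ^ (p ^ i)) = x + (\<Sum>i<m. x ^ (p ^ Suc i))"
      by (simp only: sum.lessThan_Suc_shift power_0 power_one_right)
    ultimately show ?thesis
      by (simp add: add.commute)
  qed
  finally show ?thesis
    unfolding ftrace_def m_def p_def .
qed

lemma of_nat_power_CHAR: "(of_nat k :: 'q::{finite,field}) ^ CHAR('q) = of_nat k"
  by (induction k) (simp_all add: freshmans_dream[OF finite_field_CHAR_prime refl] finite_field_CHAR_pos)

lemma power_CHAR_eq_self_imp_of_nat:
  assumes "(y::'q::{finite,field}) ^ CHAR('q) = y"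
  shows "\<exists>k < CHAR('q). of_nat k = y"
proof -
  define p where "p = CHAR('q)"
  have p: "p \<ge> 2"
    using finite_field_CHAR_prime[where 'q='q] prime_ge_2_nat by (auto simp: p_def)
  define P where "P = monom (1::'q) p + [:0, -1:]"
  have degP: "degree P = p"
    unfolding P_def using p by (subst degree_add_eq_left) (auto simp: degree_monom_eq)
  then have "P \<noteq> 0"
    using p by auto
  moreover have "{x. poly P x = 0} = {x. x ^ p = x}"
    unfolding P_def by (auto simp: poly_monom)
  ultimately have "card {x::'q. x ^ p = x} \<le> p"
    using card_poly_roots_bound[of P] degP by simp
  moreover have "inj_on (of_nat :: nat \<Rightarrow> 'q) {..<p}"
    by (rule inj_onI) (auto simp: p_def of_nat_eq_iff_cong_CHAR cong_def)
  then have "card (of_nat ` {..<p} :: 'q set) = p"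
    by (simp add: card_image)
  moreover have sub: "of_nat ` {..<p} \<subseteq> {x::'q. x ^ p = x}"
    using of_nat_power_CHAR by (auto simp: p_def)
  ultimately have "of_nat ` {..<p} = {x::'q. x ^ p = x}"
    using card_mono[OF _ sub] by (intro card_subset_eq) auto
  then show ?thesis
    using assms unfolding p_def by (metis (mono_tags, lifting) imageE lessThan_iff mem_Collect_eq)
qed

definition trace_rep :: "'q::{finite,field} \<Rightarrow> nat" where
  "trace_rep t = (THE k. k < CHAR('q) \<and> of_nat k = ftrace t)"

lemma trace_rep_less: "trace_rep (t::'q::{finite,field}) < CHAR('q)"
  and of_nat_trace_rep: "of_nat (trace_rep t) = ftrace t"
proof -
  obtain k where k: "k < CHAR('q)" "of_nat k = ftrace t"
    using power_CHAR_eq_self_imp_of_nat[OF ftrace_power_CHAR] by blast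
  have "\<exists>!k. k < CHAR('q) \<and> of_nat k = ftrace t"
  proof (rule ex1I[of _ k])
    fix k' assume k': "k' < CHAR('q) \<and> of_nat k' = ftrace t"
    then have "[k' = k] (mod CHAR('q))"
      using k by (simp add: of_nat_eq_iff_cong_CHAR[symmetric])
    with k k' show "k' = k"
      by (simp add: cong_def)
  qed (use k in auto)
  then have "trace_rep t < CHAR('q) \<and> of_nat (trace_rep t) = ftrace t"
    unfolding trace_rep_def by (rule theI')
  then show "trace_rep t < CHAR('q)" "of_nat (trace_rep t) = ftrace t"
    by simp_all
qed

lemma chi_eq_xi_power: "chi t = xi TYPE('q) ^ trace_rep (t::'q::{finite,field})"
  unfolding chi_def trace_rep_def ..

lemma norm_xi [simp]: "norm (xi TYPE('q::{finite,field})) = 1"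
  by (simp add: xi_def)

lemma xi_power: "xi TYPE('q::{finite,field}) ^ k = cis (2 * pi * real k / real CHAR('q))"
  by (simp add: xi_def DeMoivre ac_simps)

lemma xi_power_eq_1_iff: "xi TYPE('q::{finite,field}) ^ k = 1 \<longleftrightarrow> CHAR('q) dvd k"
proof
  assume "xi TYPE('q) ^ k = 1"
  then have "cos (2 * pi * real k / real CHAR('q)) = 1"
    by (metis xi_power cis.sel(1) one_complex.sel(1))
  then obtain n :: int where "2 * pi * real k / real CHAR('q) = 2 * pi * n"
    using cos_one_2pi_int by (auto simp: mult.commute)
  then have "real_of_int (int k) = real_of_int (int CHAR('q) * n)"
    using finite_field_CHAR_pos[where 'q='q] by (simp add: field_simps)
  then have "int CHAR('q) dvd int k"
    by (simp only: of_int_eq_iff dvd_triv_left)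
  then show "CHAR('q) dvd k"
    by (simp only: int_dvd_int_iff)
next
  assume "CHAR('q) dvd k"
  then obtain n where "k = CHAR('q) * n" ..
  then have "2 * pi * real k / real CHAR('q) = 2 * pi * real n"
    using finite_field_CHAR_pos[where 'q='q] by simp
  then show "xi TYPE('q) ^ k = 1"
    by (simp add: xi_power cis_multiple_2pi)
qed

lemma xi_power_mod: "xi TYPE('q::{finite,field}) ^ n = xi TYPE('q) ^ (n mod CHAR('q))"
proof -
  have "xi TYPE('q) ^ n = xi TYPE('q) ^ (CHAR('q) * (n div CHAR('q)) + n mod CHAR('q))"
    by simp
  also have "\<dots> = (xi TYPE('q) ^ CHAR('q)) ^ (n div CHAR('q)) * xi TYPE('q) ^ (n mod CHAR('q))"
    by (simp only: power_add power_mult)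
  also have "xi TYPE('q) ^ CHAR('q) = 1"
    by (simp add: xi_power_eq_1_iff)
  finally show ?thesis
    by simp
qed

lemma chi_add: "chi (s + t) = chi s * chi (t::'q::{finite,field})"
proof -
  have "of_nat (trace_rep (s + t)) = (of_nat (trace_rep s + trace_rep t) :: 'q)"
    by (simp add: of_nat_trace_rep ftrace_add)
  then have "trace_rep (s + t) mod CHAR('q) = (trace_rep s + trace_rep t) mod CHAR('q)"
    by (simp only: of_nat_eq_iff_cong_CHAR cong_def)
  then have "xi TYPE('q) ^ trace_rep (s + t) = xi TYPE('q) ^ (trace_rep s + trace_rep t)"
    by (subst (1 2) xi_power_mod) simp
  then show ?thesis
    by (simp add: chi_eq_xi_power power_add)
qed

lemma norm_chi [simp]: "norm (chi (t::'q::{finite,field})) = 1"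
  by (simp add: chi_eq_xi_power norm_power)

lemma chi_nonzero [simp]: "chi (t::'q::{finite,field}) \<noteq> 0"
  using norm_chi[of t] by (metis norm_zero zero_neq_one)

lemma chi_zero [simp]: "chi (0::'q::{finite,field}) = 1"
  using chi_add[of "0::'q" 0] by simp

lemma chi_mult_cnj [simp]: "chi t * cnj (chi (t::'q::{finite,field})) = 1"
  using complex_norm_square[of "chi t"] by simp

lemma chi_uminus: "chi (- t) = cnj (chi (t::'q::{finite,field}))"
proof -
  have "chi (- t) * chi t = cnj (chi t) * chi t"
    using chi_add[of "- t" t] chi_mult_cnj[of t] by (simp add: mult.commute)
  then show ?thesis
    by simp
qed

text \<open>The trace is given by a nonzero polynomial of degree p^(m-1) < q.\<close>

lemma ftrace_nonzero_exists: "\<exists>u::'q::{finite,field}. ftrace u \<noteq> 0"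
proof (rule ccontr)
  assume "\<nexists>u::'q. ftrace u \<noteq> 0"
  define m where "m = fdeg TYPE('q)"
  define p where "p = CHAR('q)"
  have m: "m > 0" "card (UNIV :: 'q set) = p ^ m"
    using fdeg_pos card_UNIV_eq_CHAR_power_fdeg unfolding m_def p_def by auto
  have p: "p \<ge> 2"
    using finite_field_CHAR_prime[where 'q='q] prime_ge_2_nat unfolding p_def by blast
  define T where "T = (\<Sum>i<m. monom (1::'q) (p ^ i))"
  have "coeff T 1 = (\<Sum>i<m. if p ^ i = 1 then 1 else 0)"
    unfolding T_def by (simp add: coeff_sum coeff_monom)
  also have "\<dots> = (\<Sum>i\<in>{0}. if p ^ i = 1 then 1 else 0)"
    using m p by (intro sum.mono_neutral_right) auto
  finally have "T \<noteq> 0"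
    by auto
  have "degree T \<le> p ^ (m - 1)"
    unfolding T_def
    by (rule degree_sum_le) (use p in \<open>auto intro!: order.trans[OF degree_monom_le] power_increasing\<close>)
  also have "\<dots> < card (UNIV :: 'q set)"
    using m p by (auto intro: power_strict_increasing)
  finally have "degree T < card {x. poly T x = 0}"
    using \<open>\<nexists>u. ftrace u \<noteq> 0\<close>
    by (simp add: T_def ftrace_def m_def p_def poly_sum poly_monom)
  with card_poly_roots_bound[OF \<open>T \<noteq> 0\<close>] show False
    by simp
qed

lemma chi_nontrivial: "\<exists>u::'q::{finite,field}. chi u \<noteq> 1"
proof -
  obtain u :: 'q where "ftrace u \<noteq> 0"
    using ftrace_nonzero_exists by blast
  then have "trace_rep u \<noteq> 0"
    using of_nat_trace_rep[of u] by (metis of_nat_0)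
  then have "\<not> CHAR('q) dvd trace_rep u"
    using trace_rep_less[of u] by (auto dest: dvd_imp_le)
  then have "chi u \<noteq> 1"
    by (simp add: chi_eq_xi_power xi_power_eq_1_iff)
  then show ?thesis ..
qed

lemma chi_scaled_nontrivial:
  assumes "(t::'q::{finite,field}) \<noteq> 0"
  shows "\<exists>s. chi (s * t) \<noteq> 1"
proof -
  obtain u :: 'q where "chi u \<noteq> 1"
    using chi_nontrivial by blast
  then have "chi ((u / t) * t) \<noteq> 1"
    using assms by simp
  then show ?thesis ..
qed

definition mzero :: "('n, 'q) qmat" where
  "mzero = (\<lambda>x y. 0)"

definition madd :: "('n, 'q) qmat \<Rightarrow> ('n, 'q) qmat \<Rightarrow> ('n, 'q) qmat" where
  "madd A B = (\<lambda>x y. A x y + B x y)"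

definition mdiff :: "('n, 'q) qmat \<Rightarrow> ('n, 'q) qmat \<Rightarrow> ('n, 'q) qmat" where
  "mdiff A B = (\<lambda>x y. A x y - B x y)"

definition msum :: "'i set \<Rightarrow> ('i \<Rightarrow> ('n, 'q) qmat) \<Rightarrow> ('n, 'q) qmat" where
  "msum S f = (\<lambda>x y. \<Sum>i\<in>S. f i x y)"

definition sandwich :: "('n::finite, 'q::finite) qmat \<Rightarrow> ('n, 'q) qmat \<Rightarrow> ('n, 'q) qmat" where
  "sandwich M rho = mmul (mmul M rho) (madj M)"

lemma mmul_assoc: "mmul (mmul A B) C = mmul A (mmul B C)"
  unfolding mmul_def
  by (intro ext) (simp add: sum_distrib_left sum_distrib_right mult.assoc, rule sum.swap)

lemma mmul_mid_left [simp]: "mmul mid A = A"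
  unfolding mmul_def mid_def by (simp add: of_bool_def[symmetric])

lemma mmul_mid_right [simp]: "mmul A mid = A"
  unfolding mmul_def mid_def by (simp add: of_bool_def[symmetric])

lemma madj_mmul: "madj (mmul A B) = mmul (madj B) (madj A)"
  unfolding mmul_def madj_def by (intro ext) (simp add: mult.commute)

lemma madj_madj [simp]: "madj (madj A) = A"
  unfolding madj_def by simp

lemma madj_mid [simp]: "madj mid = mid"
  unfolding madj_def mid_def by (intro ext) auto

lemma mmul_mscale_left: "mmul (mscale c A) B = mscale c (mmul A B)"
  and mmul_mscale_right: "mmul A (mscale c B) = mscale c (mmul A B)"
  unfolding mmul_def mscale_def by (simp_all add: sum_distrib_left mult_ac)

lemma madj_mscale: "madj (mscale c A) = mscale (cnj c) (madj A)"
  unfolding madj_def mscale_def by simp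

lemma mscale_mscale: "mscale a (mscale b A) = mscale (a * b) A"
  unfolding mscale_def by (simp add: mult.assoc)

lemma mscale_1 [simp]: "mscale 1 A = A"
  unfolding mscale_def by simp

lemma mscale_mzero: "mscale c mzero = mzero"
  unfolding mscale_def mzero_def by simp

lemma madd_mzero: "madd A mzero = A"
  unfolding madd_def mzero_def by simp

lemma mmul_madd_left: "mmul (madd A B) C = madd (mmul A C) (mmul B C)"
  and mmul_madd_right: "mmul C (madd A B) = madd (mmul C A) (mmul C B)"
  unfolding mmul_def madd_def by (simp_all add: algebra_simps sum.distrib)

lemma mmul_mdiff_left: "mmul (mdiff A B) C = mdiff (mmul A C) (mmul B C)"
  and mmul_mdiff_right: "mmul C (mdiff A B) = mdiff (mmul C A) (mmul C B)"
  unfolding mmul_def mdiff_def by (simp_all add: algebra_simps sum_subtractf)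

lemma madj_mdiff: "madj (mdiff A B) = mdiff (madj A) (madj B)"
  unfolding madj_def mdiff_def by simp

lemma msum_cong: "(\<And>i. i \<in> S \<Longrightarrow> f i = g i) \<Longrightarrow> msum S f = msum S g"
  unfolding msum_def by (intro ext sum.cong) auto

lemma msum_reindex_bij: "bij_betw h S T \<Longrightarrow> msum T f = msum S (\<lambda>i. f (h i))"
  unfolding msum_def by (intro ext) (rule sum.reindex_bij_betw[symmetric])

lemma msum_swap: "msum S (\<lambda>i. msum T (f i)) = msum T (\<lambda>j. msum S (\<lambda>i. f i j))"
  unfolding msum_def by (intro ext) (rule sum.swap)

lemma msum_mzero: "msum S (\<lambda>i. mzero) = mzero"
  unfolding msum_def mzero_def by simp

lemma msum_mscale: "msum S (\<lambda>i. mscale (g i) A) = mscale (\<Sum>i\<in>S. g i) A"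
  unfolding mscale_def msum_def by (intro ext) (simp add: sum_distrib_right)

lemma mscale_msum: "mscale c (msum S f) = msum S (\<lambda>i. mscale c (f i))"
  unfolding mscale_def msum_def by (intro ext) (simp add: sum_distrib_left)

lemma mmul_msum_left: "mmul (msum S f) B = msum S (\<lambda>i. mmul (f i) B)"
  unfolding mmul_def msum_def by (intro ext) (simp add: sum_distrib_right, rule sum.swap)

lemma mmul_msum_right: "mmul A (msum S f) = msum S (\<lambda>i. mmul A (f i))"
  unfolding mmul_def msum_def by (intro ext) (simp add: sum_distrib_left, rule sum.swap)

lemma madj_msum: "madj (msum S f) = msum S (\<lambda>i. madj (f i))"
  unfolding madj_def msum_def by simp

lemma mtrace_mmul_commute: "mtrace (mmul A B) = mtrace (mmul B A)"
  unfolding mtrace_def mmul_def by (subst sum.swap) (simp add: mult.commute)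

lemma mtrace_mscale: "mtrace (mscale c A) = c * mtrace A"
  unfolding mtrace_def mscale_def by (simp add: sum_distrib_left)

lemma mtrace_msum: "mtrace (msum S f) = (\<Sum>i\<in>S. mtrace (f i))"
  unfolding mtrace_def msum_def by (rule sum.swap)

lemma mtrace_madd: "mtrace (madd A B) = mtrace A + mtrace B"
  unfolding mtrace_def madd_def by (simp add: sum.distrib)

lemma mtrace_mid: "mtrace (mid :: ('n::finite, 'q::finite) qmat) = of_nat (card (UNIV :: ('n \<Rightarrow> 'q) set))"
  unfolding mtrace_def mid_def by simp

lemma mapply_mmul: "mapply (mmul A B) v = mapply A (mapply B v)"
  unfolding mapply_def mmul_def
  by (intro ext) (simp add: sum_distrib_left sum_distrib_right mult.assoc, rule sum.swap)

lemma mapply_column: "mapply A (\<lambda>x. B x y) = (\<lambda>x. mmul A B x y)"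
  unfolding mapply_def mmul_def ..

lemma mapply_mid [simp]: "mapply mid v = v"
  unfolding mapply_def mid_def by (simp add: of_bool_def[symmetric])

lemma mapply_mscale: "mapply (mscale c A) v = (\<lambda>x. c * mapply A v x)"
  unfolding mapply_def mscale_def by (simp add: sum_distrib_left mult.assoc)

lemma mapply_msum: "mapply (msum S f) v = (\<lambda>x. \<Sum>i\<in>S. mapply (f i) v x)"
  unfolding mapply_def msum_def by (intro ext) (simp add: sum_distrib_right, rule sum.swap)

lemma mapply_mdiff: "mapply (mdiff A B) v = (\<lambda>x. mapply A v x - mapply B v x)"
  unfolding mapply_def mdiff_def by (simp add: left_diff_distrib sum_subtractf)

lemma mapply_linear: "mapply A (\<lambda>x. a * u x + b * v x) = (\<lambda>x. a * mapply A u x + b * mapply A v x)"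
  unfolding mapply_def by (simp add: sum.distrib sum_distrib_left algebra_simps)

lemma mapply_scale: "mapply A (\<lambda>x. a * u x) = (\<lambda>x. a * mapply A u x)"
  unfolding mapply_def by (simp add: sum_distrib_left algebra_simps)

lemma ketbra_scale: "ketbra (\<lambda>x. a * v x) = mscale (a * cnj a) (ketbra v)"
  unfolding ketbra_def mscale_def by (simp add: mult_ac)

lemma ketbra_zero: "ketbra (\<lambda>x. 0) = mzero"
  unfolding ketbra_def mzero_def by simp

lemma mtrace_ketbra: "mtrace (ketbra v) = (\<Sum>x\<in>UNIV. of_real ((norm (v x))\<^sup>2))"
  unfolding mtrace_def ketbra_def by (simp only: complex_norm_square)

lemma mtrace_ketbra_eq_0_iff: "mtrace (ketbra v) = 0 \<longleftrightarrow> v = (\<lambda>x. 0)"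
proof -
  have "mtrace (ketbra v) = of_real (\<Sum>x\<in>UNIV. (norm (v x))\<^sup>2)"
    unfolding mtrace_ketbra by (simp only: of_real_sum)
  then have "mtrace (ketbra v) = 0 \<longleftrightarrow> (\<Sum>x\<in>UNIV. (norm (v x))\<^sup>2) = 0"
    by (simp only: of_real_eq_0_iff)
  also have "\<dots> \<longleftrightarrow> (\<forall>x. v x = 0)"
    by (simp add: sum_nonneg_eq_0_iff)
  finally show ?thesis
    by (simp add: fun_eq_iff)
qed

lemma sandwich_ketbra: "sandwich M (ketbra v) = ketbra (mapply M v)"
  unfolding sandwich_def mmul_def ketbra_def madj_def mapply_def
  by (simp add: sum_distrib_left sum_distrib_right mult_ac)

lemma sandwich_mid [simp]: "sandwich mid X = X"
  unfolding sandwich_def by simp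

lemma sandwich_mmul: "sandwich (mmul A B) rho = sandwich A (sandwich B rho)"
  unfolding sandwich_def by (simp add: madj_mmul mmul_assoc)

lemma sandwich_mscale_left: "sandwich (mscale c A) rho = mscale (c * cnj c) (sandwich A rho)"
  unfolding sandwich_def
  by (simp add: madj_mscale mmul_mscale_left mmul_mscale_right mscale_mscale mult.commute)

lemma sandwich_mscale_right: "sandwich A (mscale c rho) = mscale c (sandwich A rho)"
  unfolding sandwich_def by (simp add: mmul_mscale_left mmul_mscale_right)

lemma sandwich_msum: "sandwich A (msum S f) = msum S (\<lambda>i. sandwich A (f i))"
  unfolding sandwich_def by (simp add: mmul_msum_left mmul_msum_right)

lemma sandwich_madd: "sandwich A (madd B D) = madd (sandwich A B) (sandwich A D)"
  unfolding sandwich_def by (simp add: mmul_madd_left mmul_madd_right)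

lemma sandwich_mzero: "sandwich A mzero = mzero"
  unfolding sandwich_def mzero_def mmul_def by simp

lemma mtrace_sandwich: "mtrace (sandwich A rho) = mtrace (mmul (mmul (madj A) A) rho)"
proof -
  have "mtrace (sandwich A rho) = mtrace (mmul (mmul rho (madj A)) A)"
    unfolding sandwich_def mmul_assoc[of A] by (rule mtrace_mmul_commute)
  also have "\<dots> = mtrace (mmul (mmul (madj A) A) rho)"
    unfolding mmul_assoc[of rho] by (rule mtrace_mmul_commute)
  finally show ?thesis .
qed

definition dot :: "('n::finite \<Rightarrow> 'q::field) \<Rightarrow> ('n \<Rightarrow> 'q) \<Rightarrow> 'q" where
  "dot a b = (\<Sum>j\<in>UNIV. a j * b j)"

definition szero :: "('n, 'q::field) svec" where
  "szero = (\<lambda>_. 0, \<lambda>_. 0)"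

definition sneg :: "('n, 'q::field) svec \<Rightarrow> ('n, 'q) svec" where
  "sneg u = (\<lambda>j. - fst u j, \<lambda>j. - snd u j)"

lemma sadd_szero [simp]: "sadd u szero = u" "sadd szero u = u"
  unfolding sadd_def szero_def by simp_all

lemma sadd_commute: "sadd u v = sadd v u"
  unfolding sadd_def by (simp add: add.commute)

lemma sadd_assoc: "sadd (sadd u v) w = sadd u (sadd v w)"
  unfolding sadd_def by (simp add: add.assoc)

lemma sadd_sneg [simp]: "sadd u (sneg u) = szero" "sadd (sneg u) u = szero"
  unfolding sadd_def sneg_def szero_def by simp_all

lemma sadd_eq_szero_iff: "sadd u v = szero \<longleftrightarrow> u = sneg v"
  by (auto simp: sadd_def sneg_def szero_def prod_eq_iff fun_eq_iff eq_neg_iff_add_eq_0)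

lemma fst_sneg [simp]: "fst (sneg u) = (\<lambda>j. - fst u j)"
  and snd_sneg [simp]: "snd (sneg u) = (\<lambda>j. - snd u j)"
  unfolding sneg_def by simp_all

lemma sneg_sneg [simp]: "sneg (sneg u) = u"
  unfolding sneg_def by simp

lemma sadd_sscale_Suc: "sadd u (sscale (of_nat k) u) = sscale (of_nat (Suc k)) u"
  unfolding sadd_def sscale_def by (simp add: algebra_simps)

lemma sscale_0 [simp]: "sscale 0 u = szero"
  unfolding sscale_def szero_def by simp

lemma dot_add_left: "dot (\<lambda>j. a j + b j) c = dot a c + dot b c"
  and dot_add_right: "dot a (\<lambda>j. b j + c j) = dot a b + dot a c"
  and dot_diff_right: "dot a (\<lambda>j. b j - c j) = dot a b - dot a c"
  and dot_neg_left: "dot (\<lambda>j. - a j) c = - dot a c"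
  and dot_neg_right: "dot a (\<lambda>j. - c j) = - dot a c"
  unfolding dot_def by (simp_all add: algebra_simps sum.distrib sum_subtractf sum_negf)

lemma dot_commute: "dot a b = dot b a"
  unfolding dot_def by (simp add: mult.commute)

lemma dot_disjoint: "(\<And>j. a j = 0 \<or> b j = 0) \<Longrightarrow> dot a b = 0"
  unfolding dot_def by (rule sum.neutral) (metis mult_eq_0_iff)

lemma symp_eq_dot: "symp u v = dot (fst u) (snd v) - dot (snd u) (fst v)"
  unfolding symp_def dot_def ..

lemma symp_sadd_left: "symp (sadd v w) u = symp v u + symp w u"
  and symp_sadd_right: "symp u (sadd v w) = symp u v + symp u w"
  unfolding symp_def sadd_def by (simp_all add: algebra_simps sum.distrib)

lemma symp_sscale_left: "symp (sscale c v) u = c * symp v u"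
  and symp_sscale_right: "symp u (sscale c v) = c * symp u v"
  unfolding symp_def sscale_def by (simp_all add: sum_distrib_left right_diff_distrib mult_ac)

lemma symp_sneg_left: "symp (sneg u) v = - symp u v"
  unfolding symp_def sneg_def by (simp add: sum_negf)

lemma symp_antisym: "symp u v = - symp v u"
  unfolding symp_def by (simp add: mult.commute)

lemma symp_eq_0_commute: "symp u v = 0 \<longleftrightarrow> symp v u = 0"
  by (subst symp_antisym) simp

lemma symp_szero [simp]: "symp u szero = 0" "symp szero u = 0"
  unfolding symp_def szero_def by simp_all

lemma ssupp_subset_iff: "ssupp v \<subseteq> S \<longleftrightarrow> (\<forall>j. j \<notin> S \<longrightarrow> fst v j = 0 \<and> snd v j = 0)"
  unfolding ssupp_def by auto

lemma symp_disjoint: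
  assumes "ssupp u \<inter> ssupp v = {}"
  shows "symp u v = 0"
proof -
  have "\<And>j. (fst u j = 0 \<and> snd u j = 0) \<or> (fst v j = 0 \<and> snd v j = 0)"
    using assms unfolding ssupp_def by auto
  then have "dot (fst u) (snd v) = 0" "dot (snd u) (fst v) = 0"
    by (auto intro!: dot_disjoint)
  then show ?thesis
    by (simp add: symp_eq_dot)
qed

lemma linear_codeD:
  assumes "linear_code W"
  shows "szero \<in> W" "\<And>u v. u \<in> W \<Longrightarrow> v \<in> W \<Longrightarrow> sadd u v \<in> W"
    "\<And>c u. u \<in> W \<Longrightarrow> sscale c u \<in> W" "\<And>u. u \<in> W \<Longrightarrow> sneg u \<in> W"
proof -
  have "sneg u = sscale (-1) u" for u :: "('a, 'b) svec"
    unfolding sneg_def sscale_def by simp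
  then show "szero \<in> W" "\<And>u v. u \<in> W \<Longrightarrow> v \<in> W \<Longrightarrow> sadd u v \<in> W"
    "\<And>c u. u \<in> W \<Longrightarrow> sscale c u \<in> W" "\<And>u. u \<in> W \<Longrightarrow> sneg u \<in> W"
    using assms unfolding linear_code_def szero_def by auto
qed

lemma linear_codeI:
  assumes "szero \<in> W" "\<And>u v. u \<in> W \<Longrightarrow> v \<in> W \<Longrightarrow> sadd u v \<in> W"
    "\<And>c u. u \<in> W \<Longrightarrow> sscale c u \<in> W"
  shows "linear_code W"
  using assms unfolding linear_code_def szero_def by auto

lemma linear_code_Int: "linear_code A \<Longrightarrow> linear_code B \<Longrightarrow> linear_code (A \<inter> B)"
  unfolding linear_code_def by auto

lemma finite_svec [simp]: "finite (D :: ('n::finite, 'q::finite) svec set)"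
  by (rule finite_subset[of _ UNIV]) auto

lemma linear_code_nonempty: "linear_code W \<Longrightarrow> W \<noteq> {}"
  using linear_codeD(1) by blast

lemma card_linear_code_pos: "linear_code (W :: ('n::finite, 'q::{finite,field}) svec set) \<Longrightarrow> card W > 0"
  using linear_codeD(1) by (auto simp: card_gt_0_iff)

definition supported :: "'n set \<Rightarrow> ('n, 'q::zero) svec set" where
  "supported S = {v. ssupp v \<subseteq> S}"

lemma linear_code_supported: "linear_code (supported S :: ('n, 'q::field) svec set)"
  by (rule linear_codeI) (auto simp: supported_def ssupp_subset_iff szero_def sadd_def sscale_def)

lemma card_supported:
  "card (supported I :: ('n::finite, 'q::{finite,field}) svec set) = card (UNIV :: 'q set) ^ (2 * card I)"
proof -
  define ext :: "('n \<Rightarrow> 'q) \<Rightarrow> ('n \<Rightarrow> 'q)" where "ext a = (\<lambda>j. if j \<in> I then a j else 0)" for a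
  have "bij_betw (\<lambda>e. (restrict (fst e) I, restrict (snd e) I)) (supported I)
          ((I \<rightarrow>\<^sub>E (UNIV :: 'q set)) \<times> (I \<rightarrow>\<^sub>E (UNIV :: 'q set)))"
    by (rule bij_betw_byWitness[where f' = "\<lambda>(a, b). (ext a, ext b)"])
      (auto simp: supported_def ssupp_subset_iff ext_def PiE_def extensional_def fun_eq_iff prod_eq_iff)
  then have "card (supported I :: ('n, 'q) svec set) = card (I \<rightarrow>\<^sub>E (UNIV :: 'q set)) ^ 2"
    by (simp add: bij_betw_same_card card_cartesian_product power2_eq_square)
  then show ?thesis
    by (simp add: card_PiE power_mult mult.commute)
qed

lemma fst_proj: "fst (proj R y) = (\<lambda>j. if j \<in> R then fst y j else 0)"
  and snd_proj: "snd (proj R y) = (\<lambda>j. if j \<in> R then snd y j else 0)"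
  unfolding proj_def by simp_all

lemma proj_id: "ssupp v \<subseteq> R \<Longrightarrow> proj R v = v"
  unfolding proj_def ssupp_subset_iff by (auto simp: prod_eq_iff fun_eq_iff)

lemma ssupp_proj: "ssupp (proj J y) \<subseteq> J"
  unfolding ssupp_def proj_def by auto

lemma symp_proj:
  assumes "ssupp z \<subseteq> J"
  shows "symp z (proj J y) = symp z y"
proof -
  have "\<And>j. j \<notin> J \<Longrightarrow> fst z j = 0 \<and> snd z j = 0"
    using assms unfolding ssupp_subset_iff by auto
  then show ?thesis
    unfolding symp_def proj_def by (intro arg_cong2[where f = "(-)"] sum.cong) auto
qed

lemma proj_szero: "proj J szero = szero"
  and proj_sadd: "proj J (sadd u v) = sadd (proj J u) (proj J v)"
  and proj_sscale: "proj J (sscale c u) = sscale c (proj J u)"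
  unfolding proj_def szero_def sadd_def sscale_def by (auto simp: fun_eq_iff)

lemma linear_code_puncture:
  assumes "linear_code W"
  shows "linear_code (puncture J W)"
  unfolding puncture_def
proof (rule linear_codeI)
  show "szero \<in> proj J ` W"
    using proj_szero linear_codeD(1)[OF assms] by (metis imageI)
qed (auto simp: proj_sadd[symmetric] proj_sscale[symmetric] intro!: imageI linear_codeD[OF assms])

section \<open>Character sums and symplectic duality\<close>

lemma sum_eq_0_if_bij_scales:
  fixes f :: "'a \<Rightarrow> complex"
  assumes "bij_betw h S S" "\<And>x. x \<in> S \<Longrightarrow> f (h x) = c * f x" "c \<noteq> 1"
  shows "sum f S = 0"
proof -
  have "sum f S = sum (\<lambda>x. f (h x)) S"
    using sum.reindex_bij_betw[OF assms(1), of f] by simp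
  also have "\<dots> = c * sum f S"
    using assms(2) by (simp add: sum_distrib_left)
  finally have "(1 - c) * sum f S = 0"
    by (simp add: algebra_simps)
  with assms(3) show ?thesis
    by simp
qed

lemma sum_chi_symp_linear_code:
  fixes W :: "('n::finite, 'q::{finite,field}) svec set"
  assumes W: "linear_code W"
  shows "(\<Sum>w\<in>W. chi (symp v w)) = (if \<forall>w\<in>W. symp v w = 0 then of_nat (card W) else 0)"
proof (cases "\<forall>w\<in>W. symp v w = 0")
  case False
  then obtain w0 where w0: "w0 \<in> W" "symp v w0 \<noteq> 0"
    by blast
  obtain s where s: "chi (s * symp v w0) \<noteq> 1"
    using chi_scaled_nontrivial[OF w0(2)] by blast
  define w1 where "w1 = sscale s w0"
  have w1: "w1 \<in> W"
    unfolding w1_def using linear_codeD(3)[OF W w0(1)] .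
  have "(\<Sum>w\<in>W. chi (symp v w)) = 0"
  proof (rule sum_eq_0_if_bij_scales)
    show "bij_betw (\<lambda>w. sadd w w1) W W"
      by (rule bij_betw_byWitness[where f' = "\<lambda>w. sadd w (sneg w1)"])
        (auto simp: linear_codeD[OF W] w1 sadd_assoc)
    show "chi (symp v (sadd w w1)) = chi (s * symp v w0) * chi (symp v w)" for w
      by (simp add: symp_sadd_right chi_add w1_def symp_sscale_right mult.commute)
  qed (use s in auto)
  then show ?thesis
    by (simp only: if_not_P[OF False])
qed simp

lemma symp_supported_eq_0_iff:
  fixes c :: "('n::finite, 'q::field) svec"
  shows "(\<forall>e\<in>supported S. symp c e = 0) \<longleftrightarrow> (\<forall>j\<in>S. fst c j = 0 \<and> snd c j = 0)"
proof
  assume orth: "\<forall>e\<in>supported S. symp c e = 0"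
  show "\<forall>j\<in>S. fst c j = 0 \<and> snd c j = 0"
  proof
    fix j assume "j \<in> S"
    define d where "d = (\<lambda>i. if i = j then (1::'q) else 0)"
    have "((\<lambda>_. 0), d) \<in> supported S" "(d, \<lambda>_. 0) \<in> supported S"
      using \<open>j \<in> S\<close> by (auto simp: supported_def ssupp_subset_iff d_def)
    moreover have "symp c ((\<lambda>_. 0), d) = fst c j" "symp c (d, \<lambda>_. 0) = - snd c j"
      unfolding symp_def d_def by (simp_all add: of_bool_def[symmetric])
    ultimately show "fst c j = 0 \<and> snd c j = 0"
      using orth by fastforce
  qed
next
  assume vanish: "\<forall>j\<in>S. fst c j = 0 \<and> snd c j = 0"
  show "\<forall>e\<in>supported S. symp c e = 0"
  proof
    fix e :: "('n, 'q) svec"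
    assume "e \<in> supported S"
    with vanish have "ssupp c \<inter> ssupp e = {}"
      unfolding supported_def ssupp_def by blast
    then show "symp c e = 0"
      by (rule symp_disjoint)
  qed
qed

definition sdual_on :: "'n set \<Rightarrow> ('n::finite, 'q::field) svec set \<Rightarrow> ('n, 'q) svec set" where
  "sdual_on S W = {v \<in> supported S. \<forall>w\<in>W. symp v w = 0}"

lemma sdual_on_UNIV: "sdual_on UNIV W = sdual W"
  unfolding sdual_def sdual_on_def supported_def by auto

lemma linear_code_sdual_on: "linear_code (sdual_on S W)"
  using linear_codeD[OF linear_code_supported]
  by (intro linear_codeI) (auto simp: sdual_on_def symp_sadd_left symp_sscale_left)

lemma linear_code_sdual: "linear_code (sdual W)"
  using linear_code_sdual_on[of UNIV W] by (simp add: sdual_on_UNIV)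

lemma sum_chi_symp_supported:
  fixes w :: "('n::finite, 'q::{finite,field}) svec"
  assumes "w \<in> supported S"
  shows "(\<Sum>v\<in>supported S. chi (symp v w)) = (if w = szero then of_nat (card (supported S :: ('n, 'q) svec set)) else 0)"
proof -
  have "(\<Sum>v\<in>supported S. chi (symp v w)) = (\<Sum>v\<in>supported S. chi (symp (sneg w) v))"
    by (simp add: symp_sneg_left symp_antisym[of w])
  also have "\<dots> = (if \<forall>v\<in>supported S. symp (sneg w) v = 0 then of_nat (card (supported S :: ('n, 'q) svec set)) else 0)"
    by (rule sum_chi_symp_linear_code[OF linear_code_supported])
  also have "(\<forall>v\<in>supported S. symp (sneg w) v = 0) \<longleftrightarrow> w = szero"
    using assms unfolding symp_supported_eq_0_iff
    by (auto simp: supported_def ssupp_subset_iff szero_def prod_eq_iff fun_eq_iff)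
  finally show ?thesis .
qed

text \<open>Both sides evaluate the double sum of chi (symp v w) over v in supported S and w in W.\<close>

lemma card_mult_card_sdual_on:
  fixes W :: "('n::finite, 'q::{finite,field}) svec set"
  assumes W: "linear_code W" and sub: "W \<subseteq> supported S"
  shows "card W * card (sdual_on S W) = card (supported S :: ('n, 'q) svec set)"
proof -
  have "(\<Sum>v\<in>supported S. \<Sum>w\<in>W. chi (symp v w))
      = (\<Sum>v\<in>supported S. if v \<in> sdual_on S W then of_nat (card W) else (0::complex))"
    by (rule sum.cong) (auto simp: sum_chi_symp_linear_code[OF W] sdual_on_def)
  also have "\<dots> = (\<Sum>v\<in>sdual_on S W. of_nat (card W))"
    by (rule sum.mono_neutral_cong_right) (auto simp: sdual_on_def)
  also have "\<dots> = of_nat (card W * card (sdual_on S W))"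
    by simp
  finally have rows: "(\<Sum>v\<in>supported S. \<Sum>w\<in>W. chi (symp v w)) = of_nat (card W * card (sdual_on S W))" .
  have "(\<Sum>w\<in>W. \<Sum>v\<in>supported S. chi (symp v w))
      = (\<Sum>w\<in>W. if w = szero then of_nat (card (supported S :: ('n, 'q) svec set)) else (0::complex))"
    using sub by (intro sum.cong) (auto simp: sum_chi_symp_supported)
  also have "\<dots> = of_nat (card (supported S :: ('n, 'q) svec set))"
    using linear_codeD(1)[OF W] by simp
  finally have "(\<Sum>w\<in>W. \<Sum>v\<in>supported S. chi (symp v w)) = of_nat (card (supported S :: ('n, 'q) svec set))" .
  with rows show ?thesis
    by (simp only: sum.swap[of _ W] of_nat_eq_iff)
qed

lemma sdual_sdual:
  fixes C :: "('n::finite, 'q::{finite,field}) svec set"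
  assumes C: "linear_code C"
  shows "sdual (sdual C) = C"
proof -
  have sub: "C \<subseteq> sdual (sdual C)"
    unfolding sdual_def by (auto simp: symp_eq_0_commute)
  have "card C * card (sdual C) = card (sdual C) * card (sdual (sdual C))"
    using card_mult_card_sdual_on[OF C, where S = UNIV]
      card_mult_card_sdual_on[OF linear_code_sdual[of C], where S = UNIV]
    by (simp add: sdual_on_UNIV supported_def)
  then have "card C = card (sdual (sdual C))"
    using card_linear_code_pos[OF linear_code_sdual, of C] by (auto simp: mult.commute)
  with sub show ?thesis
    by (intro card_subset_eq[symmetric]) auto
qed

lemma sdual_on_puncture_sdual:
  fixes C :: "('n::finite, 'q::{finite,field}) svec set"
  assumes "linear_code C"
  shows "sdual_on J (puncture J (sdual C)) = C \<inter> supported J"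
proof -
  have "sdual_on J (puncture J (sdual C)) = supported J \<inter> sdual (sdual C)"
    by (auto simp: sdual_on_def puncture_def sdual_def supported_def symp_proj)
  then show ?thesis
    using sdual_sdual[OF assms] by auto
qed

lemma puncture_subset_supported: "puncture J D \<subseteq> supported J"
  unfolding puncture_def supported_def by (rule image_subsetI) (simp add: ssupp_proj)

lemma puncture_sdual:
  fixes C :: "('n::finite, 'q::{finite,field}) svec set"
  assumes C: "linear_code C"
  shows "puncture J (sdual C) = sdual_on J (C \<inter> supported J)"
proof -
  define W where "W = puncture J (sdual C)"
  define CJ where "CJ = C \<inter> supported J"
  have W: "linear_code W" "W \<subseteq> supported J"
    unfolding W_def by (rule linear_code_puncture[OF linear_code_sdual], rule puncture_subset_supported)
  have CJ: "linear_code CJ" "CJ \<subseteq> supported J"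
    unfolding CJ_def by (rule linear_code_Int[OF C linear_code_supported], blast)
  have "W \<subseteq> sdual_on J CJ"
  proof
    fix w assume "w \<in> W"
    then obtain y where y: "y \<in> sdual C" "w = proj J y"
      unfolding W_def puncture_def by blast
    have "symp w c = 0" if "c \<in> CJ" for c
    proof -
      have "ssupp c \<subseteq> J" "symp y c = 0"
        using that y(1) by (auto simp: CJ_def supported_def sdual_def)
      then have "symp c w = 0"
        using symp_proj[of c J y] symp_eq_0_commute[of y c] by (simp add: y(2))
      then show ?thesis
        using symp_eq_0_commute[of w c] by simp
    qed
    with \<open>w \<in> W\<close> W(2) show "w \<in> sdual_on J CJ"
      by (auto simp: sdual_on_def)
  qed
  moreover have "card W * card CJ = card CJ * card (sdual_on J CJ)"
    using card_mult_card_sdual_on[OF W] card_mult_card_sdual_on[OF CJ]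
      sdual_on_puncture_sdual[OF C, of J]
    by (simp only: W_def CJ_def)
  then have "card W = card (sdual_on J CJ)"
    using card_linear_code_pos[OF CJ(1)] by (auto simp: mult.commute)
  ultimately show ?thesis
    unfolding W_def CJ_def by (intro card_subset_eq finite_svec)
qed

lemma shorten_eq_Int_supported: "shorten I D = D \<inter> supported I"
proof
  show "shorten I D \<subseteq> D \<inter> supported I"
    by (auto simp: shorten_def supported_def proj_id)
  show "D \<inter> supported I \<subseteq> shorten I D"
    unfolding shorten_def supported_def by (auto intro: rev_image_eqI simp: proj_id)
qed

lemma sdual_on_mono: "I \<subseteq> J \<Longrightarrow> sdual_on I W \<subseteq> sdual_on J W"
  unfolding sdual_on_def supported_def by auto

lemma shorten_puncture_sdual:
  fixes C :: "('n::finite, 'q::{finite,field}) svec set"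
  assumes "linear_code C" "I \<subseteq> J"
  shows "shorten I (puncture J (sdual C)) = sdual_on I (C \<inter> supported J)"
  using assms(2)
  by (auto simp: shorten_eq_Int_supported puncture_sdual[OF assms(1)] sdual_on_def supported_def)

text \<open>By self-orthogonality one inclusion of the shortening condition always holds.\<close>

lemma shorten_puncture_sdual_eq_iff:
  fixes C :: "('n::finite, 'q::{finite,field}) svec set"
  assumes "linear_code C" "symp_self_orth C" "I \<subseteq> J"
  shows "shorten I (puncture J (sdual C)) = shorten I C \<longleftrightarrow> sdual_on I (C \<inter> supported J) \<subseteq> C"
proof -
  have "C \<inter> supported I \<subseteq> sdual_on I (C \<inter> supported J)"
    using assms(2) unfolding symp_self_orth_def by (auto simp: sdual_on_def sdual_def)
  moreover have "sdual_on I (C \<inter> supported J) \<subseteq> supported I"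
    by (auto simp: sdual_on_def)
  ultimately show ?thesis
    unfolding shorten_puncture_sdual[OF assms(1,3)] by (auto simp: shorten_eq_Int_supported)
qed

lemma pauliE_apply: "pauliE y x' x = (if x' = (\<lambda>j. x j + fst y j) then chi (dot (snd y) x) else 0)"
  unfolding pauliE_def dot_def ..

lemma sum_mult_delta:
  fixes f :: "'a::finite \<Rightarrow> complex"
  shows "(\<Sum>z\<in>UNIV. f z * (if z = t then c else 0)) = f t * c"
  by (simp add: if_distrib[of "(*) (f _)"] cong: if_cong)

lemma pauliE_mult:
  "mmul (pauliE u) (pauliE v) = mscale (chi (dot (snd u) (fst v))) (pauliE (sadd u v))"
proof (intro ext)
  fix x' x :: "'a \<Rightarrow> 'b"
  define t where "t = (\<lambda>j. x j + fst v j)"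
  have "mmul (pauliE u) (pauliE v) x' x = pauliE u x' t * chi (dot (snd v) x)"
    unfolding mmul_def pauliE_apply[of v] t_def by (rule sum_mult_delta)
  moreover have "(x' = (\<lambda>j. t j + fst u j)) = (x' = (\<lambda>j. x j + fst (sadd u v) j))"
    unfolding t_def sadd_def by (simp add: add_ac)
  moreover have "chi (dot (snd u) t) * chi (dot (snd v) x)
      = chi (dot (snd u) (fst v)) * chi (dot (snd (sadd u v)) x)"
    unfolding t_def sadd_def by (simp add: dot_add_right dot_add_left chi_add mult_ac)
  ultimately show "mmul (pauliE u) (pauliE v) x' x = mscale (chi (dot (snd u) (fst v))) (pauliE (sadd u v)) x' x"
    unfolding mscale_def pauliE_apply by simp
qed

lemma mmul_pauliE_right_apply:
  "mmul M (pauliE y) x' x = M x' (\<lambda>j. x j + fst y j) * chi (dot (snd y) x)"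
  unfolding mmul_def pauliE_apply by (rule sum_mult_delta)

lemma mmul_pauliE_left_apply:
  "mmul (pauliE y) M x' x = chi (dot (snd y) (\<lambda>j. x' j - fst y j)) * M (\<lambda>j. x' j - fst y j) x"
proof -
  define s where "s = (\<lambda>j. x' j - fst y j)"
  have "mmul (pauliE y) M x' x = (\<Sum>z\<in>UNIV. M z x * (if z = s then chi (dot (snd y) s) else 0))"
    unfolding mmul_def pauliE_apply s_def by (intro sum.cong) (auto simp: fun_eq_iff mult.commute)
  then show ?thesis
    unfolding s_def[symmetric] by (simp add: sum_mult_delta mult.commute)
qed

lemma pauliE_szero [simp]: "pauliE (szero :: ('n::finite, 'q::{finite,field}) svec) = mid"
  unfolding pauliE_apply[abs_def] szero_def mid_def dot_def by (intro ext) simp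

lemma madj_pauliE: "madj (pauliE u) = mscale (chi (dot (snd u) (fst u))) (pauliE (sneg u))"
proof (intro ext)
  fix x' x :: "'a \<Rightarrow> 'b"
  have "(x = (\<lambda>j. x' j + fst u j)) = (x' = (\<lambda>j. x j + fst (sneg u) j))"
    by (auto simp: algebra_simps)
  moreover have "cnj (chi (dot (snd u) x')) = chi (dot (snd u) (fst u)) * chi (dot (snd (sneg u)) x)"
    if "x' = (\<lambda>j. x j + fst (sneg u) j)"
  proof -
    have "- dot (snd u) x' = dot (snd u) (fst u) + dot (snd (sneg u)) x"
      unfolding that by (simp add: dot_diff_right dot_neg_left)
    then show ?thesis
      by (metis chi_add chi_uminus)
  qed
  ultimately show "madj (pauliE u) x' x = mscale (chi (dot (snd u) (fst u))) (pauliE (sneg u)) x' x"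
    unfolding madj_def mscale_def pauliE_apply by auto
qed

lemma pauliE_unitary:
  "mmul (madj (pauliE u)) (pauliE u) = mid" "mmul (pauliE u) (madj (pauliE u)) = mid"
proof -
  have "chi (dot (snd u) (fst u)) * chi (dot (snd (sneg u)) (fst u)) = 1"
    by (simp add: dot_neg_left chi_uminus)
  then show "mmul (madj (pauliE u)) (pauliE u) = mid"
    by (simp add: madj_pauliE mmul_mscale_left pauliE_mult mscale_mscale)
  have "chi (dot (snd u) (fst u)) * chi (dot (snd u) (fst (sneg u))) = 1"
    by (simp add: dot_neg_right chi_uminus)
  then show "mmul (pauliE u) (madj (pauliE u)) = mid"
    by (simp add: madj_pauliE mmul_mscale_right pauliE_mult mscale_mscale)
qed

lemma sandwich_pauliE_inverse: "sandwich (madj (pauliE u)) (sandwich (pauliE u) X) = X"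
  unfolding sandwich_mmul[symmetric] pauliE_unitary by simp

lemma pauliE_commute:
  "mmul (pauliE u) (pauliE v) = mscale (chi (symp v u)) (mmul (pauliE v) (pauliE u))"
proof -
  have "chi (dot (snd u) (fst v)) = chi (symp v u) * chi (dot (snd v) (fst u))"
    by (simp add: symp_eq_dot chi_add[symmetric] dot_commute)
  then show ?thesis
    by (simp add: pauliE_mult mscale_mscale sadd_commute[of v])
qed

lemma sum_chi_dot_eq_0:
  fixes b :: "'n::finite \<Rightarrow> 'q::{finite,field}"
  assumes "b \<noteq> (\<lambda>_. 0)"
  shows "(\<Sum>x\<in>UNIV. chi (dot b x)) = 0"
proof -
  obtain j0 where j0: "b j0 \<noteq> 0"
    using assms by auto
  obtain s where s: "chi (s * b j0) \<noteq> 1"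
    using chi_scaled_nontrivial[OF j0] by blast
  have shift: "dot b (x(j0 := x j0 + s)) = dot b x + b j0 * s" for x
  proof -
    have "x(j0 := x j0 + s) = (\<lambda>j. x j + (if j = j0 then s else 0))"
      by auto
    then show ?thesis
      by (simp add: dot_add_right) (simp add: dot_def if_distrib[of "(*) (b _)"] cong: if_cong)
  qed
  show ?thesis
  proof (rule sum_eq_0_if_bij_scales[where h = "\<lambda>x. x(j0 := x j0 + s)"])
    show "bij_betw (\<lambda>x. x(j0 := x j0 + s)) UNIV UNIV"
      by (rule bij_betw_byWitness[where f' = "\<lambda>x. x(j0 := x j0 - s)"]) auto
    show "chi (dot b (x(j0 := x j0 + s))) = chi (s * b j0) * chi (dot b x)" for x
      by (simp add: shift chi_add mult.commute)
  qed (use s in auto)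
qed

lemma mtrace_pauliE:
  "mtrace (pauliE (u :: ('n::finite, 'q::{finite,field}) svec)) =
     (if u = szero then of_nat (card (UNIV :: ('n \<Rightarrow> 'q) set)) else 0)"
proof (cases "u = szero")
  case True
  then show ?thesis
    by (simp add: mtrace_mid)
next
  case False
  show ?thesis
  proof (cases "fst u = (\<lambda>_. 0)")
    case True
    with False have "snd u \<noteq> (\<lambda>_. 0)"
      unfolding szero_def by (auto simp: prod_eq_iff)
    with False True show ?thesis
      unfolding mtrace_def pauliE_apply by (simp add: sum_chi_dot_eq_0)
  next
    case nz: False
    have "x \<noteq> (\<lambda>j. x j + fst u j)" for x :: "'n \<Rightarrow> 'q"
      using nz by (auto simp: fun_eq_iff)
    with False show ?thesis
      unfolding mtrace_def pauliE_apply by simp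
  qed
qed

section \<open>The stabilizer code and its projections\<close>

locale stabilizer_code =
  fixes C :: "('n::finite, 'q::{finite,field}) svec set" and lam :: "('n, 'q) qmat \<Rightarrow> complex"
  assumes linear: "linear_code C"
    and character: "stab_character C lam"
begin

definition eigval :: "('n, 'q) svec \<Rightarrow> complex" where
  "eigval y = lam (pauliE y)"

definition stab_op :: "('n, 'q) svec \<Rightarrow> ('n, 'q) qmat" where
  "stab_op y = mscale (1 / eigval y) (pauliE y)"

definition code_proj :: "('n, 'q) svec set \<Rightarrow> ('n, 'q) qmat" where
  "code_proj D = mscale (1 / of_nat (card D)) (msum D stab_op)"

lemma lam_mmul: "A \<in> stab_group C \<Longrightarrow> B \<in> stab_group C \<Longrightarrow> lam (mmul A B) = lam A * lam B"
  and lam_nonzero: "A \<in> stab_group C \<Longrightarrow> lam A \<noteq> 0"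
  and lam_xi: "lam (mscale (xi TYPE('q)) mid) = xi TYPE('q)"
  using character unfolding stab_character_def by blast+

lemma lam_mid: "lam (mid :: ('n, 'q) qmat) = 1"
proof -
  have mid: "mid \<in> stab_group C"
    using stab_group.scalar[of 0] by simp
  then have "lam mid * lam mid = lam mid * 1"
    using lam_mmul[OF mid mid] by simp
  then show ?thesis
    using lam_nonzero[OF mid] mult_left_cancel by metis
qed

lemma lam_xi_power: "lam (mscale (xi TYPE('q) ^ l) mid) = xi TYPE('q) ^ l"
proof (induction l)
  case 0
  then show ?case
    using lam_mid by simp
next
  case (Suc l)
  have eq: "mscale (xi TYPE('q) ^ Suc l) mid = mmul (mscale (xi TYPE('q) ^ 1) mid) (mscale (xi TYPE('q) ^ l) mid)"
    by (simp add: mmul_mscale_left mmul_mscale_right mscale_mscale mult.commute)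
  show ?case
    unfolding eq lam_mmul[OF stab_group.scalar stab_group.scalar] Suc using lam_xi by simp
qed

lemma mscale_chi_mem_stab_group:
  fixes t :: 'q
  assumes "A \<in> stab_group C"
  shows "mscale (chi t) A \<in> stab_group C"
    and "lam (mscale (chi t) A) = chi t * lam A"
proof -
  have eq: "mscale (chi t) A = mmul (mscale (xi TYPE('q) ^ trace_rep t) mid) A"
    by (simp add: mmul_mscale_left chi_eq_xi_power)
  show "mscale (chi t) A \<in> stab_group C"
    unfolding eq by (rule stab_group.mult[OF stab_group.scalar assms])
  have "lam (mscale (chi t) A) = lam (mmul (mscale (xi TYPE('q) ^ trace_rep t) mid) A)"
    by (simp only: eq)
  also have "\<dots> = xi TYPE('q) ^ trace_rep t * lam A"
    by (simp only: lam_mmul[OF stab_group.scalar assms] lam_xi_power)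
  finally show "lam (mscale (chi t) A) = chi t * lam A"
    by (simp only: chi_eq_xi_power)
qed

lemma eigval_sadd:
  assumes "c \<in> C" "d \<in> C"
  shows "eigval c * eigval d = chi (dot (snd c) (fst d)) * eigval (sadd c d)"
proof -
  have "eigval c * eigval d = lam (mmul (pauliE c) (pauliE d))"
    unfolding eigval_def using lam_mmul[OF stab_group.gen stab_group.gen, OF assms] by simp
  also have "\<dots> = chi (dot (snd c) (fst d)) * eigval (sadd c d)"
    unfolding pauliE_mult eigval_def
    by (rule mscale_chi_mem_stab_group(2)[OF stab_group.gen[OF linear_codeD(2)[OF linear assms]]])
  finally show ?thesis .
qed

lemma eigval_szero [simp]: "eigval szero = 1"
  unfolding eigval_def using lam_mid by simp

lemma eigval_nonzero: "c \<in> C \<Longrightarrow> eigval c \<noteq> 0"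
  unfolding eigval_def by (rule lam_nonzero[OF stab_group.gen])

lemma eigval_power: "c \<in> C \<Longrightarrow> \<exists>t::'q. eigval c ^ k = chi t * eigval (sscale (of_nat k) c)"
proof (induction k)
  case 0
  then show ?case
    by (intro exI[of _ 0]) simp
next
  case (Suc k)
  obtain t :: 'q where t: "eigval c ^ k = chi t * eigval (sscale (of_nat k) c)"
    using Suc by blast
  have "eigval c ^ Suc k = chi t * (eigval c * eigval (sscale (of_nat k) c))"
    using t by (simp add: mult_ac)
  also have "\<dots> = chi (t + dot (snd c) (fst (sscale (of_nat k) c))) * eigval (sscale (of_nat (Suc k)) c)"
    using eigval_sadd[OF Suc.prems linear_codeD(3)[OF linear Suc.prems]]
    by (simp add: sadd_sscale_Suc chi_add mult_ac)
  finally show ?case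
    by blast
qed

text \<open>Since p * c = 0, the p-th power of an eigenvalue is a character value, hence of norm 1.\<close>

lemma norm_eigval: "c \<in> C \<Longrightarrow> norm (eigval c) = 1"
proof -
  assume c: "c \<in> C"
  obtain t :: 'q where "eigval c ^ CHAR('q) = chi t * eigval (sscale (of_nat CHAR('q)) c)"
    using eigval_power[OF c] by blast
  then have "norm (eigval c ^ CHAR('q)) = 1"
    by simp
  then have "norm (eigval c) ^ CHAR('q) = 1 ^ CHAR('q)"
    by (simp only: norm_power power_one)
  then show ?thesis
    by (rule power_eq_imp_eq_base) (use finite_field_CHAR_pos in auto)
qed

lemma cnj_eigval: "c \<in> C \<Longrightarrow> cnj (eigval c) = 1 / eigval c"
proof -
  assume c: "c \<in> C"
  have "cnj (eigval c) * eigval c = 1"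
    using complex_norm_square[of "eigval c"] norm_eigval[OF c] by (simp add: mult.commute)
  then show ?thesis
    using eigval_nonzero[OF c] by (simp add: field_simps)
qed

lemma stab_code_iff:
  "v \<in> stab_code C lam \<longleftrightarrow> (\<forall>c\<in>C. mapply (pauliE c) v = (\<lambda>x. eigval c * v x))"
proof
  assume "v \<in> stab_code C lam"
  then show "\<forall>c\<in>C. mapply (pauliE c) v = (\<lambda>x. eigval c * v x)"
    unfolding stab_code_def eigval_def using stab_group.gen by blast
next
  assume eig: "\<forall>c\<in>C. mapply (pauliE c) v = (\<lambda>x. eigval c * v x)"
  have "mapply E v = (\<lambda>x. lam E * v x)" if "E \<in> stab_group C" for E
    using that
  proof (induction rule: stab_group.induct)
    case (scalar l)
    then show ?case
      by (simp add: mapply_mscale lam_xi_power)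
  next
    case (gen y)
    then show ?case
      using eig unfolding eigval_def by blast
  next
    case (mult A B)
    then show ?case
      by (simp add: mapply_mmul lam_mmul mapply_scale mult_ac)
  qed
  then show "v \<in> stab_code C lam"
    unfolding stab_code_def by blast
qed

lemma stab_code_linear:
  "u \<in> stab_code C lam \<Longrightarrow> v \<in> stab_code C lam \<Longrightarrow> (\<lambda>x. a * u x + b * v x) \<in> stab_code C lam"
  unfolding stab_code_iff by (simp add: mapply_linear algebra_simps)

lemma stab_op_mult:
  assumes "c \<in> C" "d \<in> C"
  shows "mmul (stab_op c) (stab_op d) = stab_op (sadd c d)"
proof -
  have "mmul (stab_op c) (stab_op d)
      = mscale (chi (dot (snd c) (fst d)) / (eigval c * eigval d)) (pauliE (sadd c d))"
    unfolding stab_op_def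
    by (simp add: mmul_mscale_left mmul_mscale_right pauliE_mult mscale_mscale mult.commute[of "eigval d"])
  also have "chi (dot (snd c) (fst d)) / (eigval c * eigval d) = 1 / eigval (sadd c d)"
    using eigval_sadd[OF assms] eigval_nonzero[OF linear_codeD(2)[OF linear assms]]
    by (auto simp: field_simps)
  finally show ?thesis
    unfolding stab_op_def .
qed

lemma madj_stab_op:
  assumes c: "c \<in> C"
  shows "madj (stab_op c) = stab_op (sneg c)"
proof -
  have nc: "sneg c \<in> C"
    using linear_codeD(4)[OF linear c] .
  have "eigval c * eigval (sneg c) = cnj (chi (dot (snd c) (fst c)))"
    using eigval_sadd[OF c nc] by (simp add: dot_neg_right chi_uminus)
  then have "eigval c * eigval (sneg c) * chi (dot (snd c) (fst c)) = 1"
    using chi_mult_cnj by (simp add: mult.commute)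
  then have "eigval c * chi (dot (snd c) (fst c)) = 1 / eigval (sneg c)"
    using eigval_nonzero[OF nc] by (simp add: field_simps)
  moreover have "cnj (1 / eigval c) = eigval c"
    using cnj_eigval[OF c] eigval_nonzero[OF c] by (simp add: complex_cnj_divide)
  ultimately show ?thesis
    unfolding stab_op_def madj_mscale madj_pauliE mscale_mscale by simp
qed

lemma mapply_stab_op: "v \<in> stab_code C lam \<Longrightarrow> c \<in> C \<Longrightarrow> mapply (stab_op c) v = v"
  unfolding stab_op_def stab_code_iff by (auto simp: mapply_mscale eigval_nonzero)

lemma sandwich_pauliE_stab_op: "sandwich (pauliE e) (stab_op c) = mscale (chi (symp c e)) (stab_op c)"
proof -
  have "mmul (mmul (pauliE e) (pauliE c)) (madj (pauliE e)) = mscale (chi (symp c e)) (pauliE c)"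
    unfolding pauliE_commute[of e c] mmul_mscale_left mmul_assoc pauliE_unitary by simp
  then show ?thesis
    unfolding sandwich_def stab_op_def
    by (simp add: mmul_mscale_left mmul_mscale_right mscale_mscale mult.commute)
qed

lemma msum_stab_op: "linear_code D \<Longrightarrow> msum D stab_op = mscale (of_nat (card D)) (code_proj D)"
  unfolding code_proj_def mscale_mscale using linear_code_nonempty[of D] by simp

context
  fixes D assumes linear_D: "linear_code D" and D_subset: "D \<subseteq> C"
begin

lemma stab_op_code_proj: "c \<in> D \<Longrightarrow> mmul (stab_op c) (code_proj D) = code_proj D"
proof -
  assume c: "c \<in> D"
  have "msum D (\<lambda>d. mmul (stab_op c) (stab_op d)) = msum D (\<lambda>d. stab_op (sadd c d))"
    by (intro msum_cong stab_op_mult) (use D_subset c in auto)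
  also have "\<dots> = msum D stab_op"
    by (rule msum_reindex_bij[symmetric], rule bij_betw_byWitness[where f' = "\<lambda>d. sadd (sneg c) d"])
      (use c linear_D in \<open>auto simp: linear_codeD sadd_assoc[symmetric]\<close>)
  finally show ?thesis
    unfolding code_proj_def by (simp add: mmul_mscale_right mmul_msum_right)
qed

lemma code_proj_stab_op: "c \<in> D \<Longrightarrow> mmul (code_proj D) (stab_op c) = code_proj D"
proof -
  assume c: "c \<in> D"
  have "msum D (\<lambda>d. mmul (stab_op d) (stab_op c)) = msum D (\<lambda>d. stab_op (sadd d c))"
    by (intro msum_cong stab_op_mult) (use D_subset c in auto)
  also have "\<dots> = msum D stab_op"
    by (rule msum_reindex_bij[symmetric], rule bij_betw_byWitness[where f' = "\<lambda>d. sadd d (sneg c)"])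
      (use c linear_D in \<open>auto simp: linear_codeD sadd_assoc\<close>)
  finally show ?thesis
    unfolding code_proj_def by (simp add: mmul_mscale_left mmul_msum_left)
qed

lemma code_proj_idem: "mmul (code_proj D) (code_proj D) = code_proj D"
proof -
  have "mmul (code_proj D) (code_proj D) = mscale (1 / of_nat (card D)) (msum D (\<lambda>c. code_proj D))"
    by (subst (1) code_proj_def) (simp add: mmul_mscale_left mmul_msum_left stab_op_code_proj cong: msum_cong)
  also have "\<dots> = code_proj D"
    using msum_mscale[of D "\<lambda>_. 1" "code_proj D"] linear_code_nonempty[OF linear_D]
    by (simp add: mscale_mscale)
  finally show ?thesis .
qed

lemma madj_code_proj: "madj (code_proj D) = code_proj D"
proof -
  have "madj (msum D stab_op) = msum D (\<lambda>c. stab_op (sneg c))"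
    unfolding madj_msum using D_subset by (intro msum_cong) (auto simp: madj_stab_op)
  also have "\<dots> = msum D stab_op"
    by (rule msum_reindex_bij[symmetric], rule bij_betw_byWitness[where f' = sneg])
      (use linear_D in \<open>auto simp: linear_codeD\<close>)
  finally show ?thesis
    unfolding code_proj_def madj_mscale by simp
qed

lemma mapply_code_proj: "v \<in> stab_code C lam \<Longrightarrow> mapply (code_proj D) v = v"
proof -
  assume v: "v \<in> stab_code C lam"
  have "(\<Sum>c\<in>D. mapply (stab_op c) v x) = of_nat (card D) * v x" for x
    by (simp add: mapply_stab_op[OF v subsetD[OF D_subset]])
  then show ?thesis
    unfolding code_proj_def mapply_mscale mapply_msum
    using linear_code_nonempty[OF linear_D] by simp
qed

lemma mtrace_code_proj: "mtrace (code_proj D) = of_nat (card (UNIV :: ('n \<Rightarrow> 'q) set)) / of_nat (card D)"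
proof -
  have "mtrace (msum D stab_op) = (\<Sum>c\<in>D. if c = szero then of_nat (card (UNIV :: ('n \<Rightarrow> 'q) set)) else 0)"
    unfolding mtrace_msum stab_op_def mtrace_mscale mtrace_pauliE by (intro sum.cong) auto
  also have "\<dots> = of_nat (card (UNIV :: ('n \<Rightarrow> 'q) set))"
    using linear_codeD(1)[OF linear_D] by simp
  finally show ?thesis
    unfolding code_proj_def mtrace_mscale by simp
qed

end

end

section \<open>Local operators, Kraus maps and the depolarizing channel\<close>

definition agree_off :: "'n set \<Rightarrow> ('n \<Rightarrow> 'q) \<Rightarrow> ('n \<Rightarrow> 'q) \<Rightarrow> bool" where
  "agree_off J x y \<longleftrightarrow> (\<forall>j. j \<notin> J \<longrightarrow> x j = y j)"

definition local_on :: "'n set \<Rightarrow> ('n, 'q::zero) qmat \<Rightarrow> bool" where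
  "local_on J M \<longleftrightarrow> lift_op J M = M"

lemma lift_op_apply: "lift_op J A x y = (if agree_off J x y then A (restr J x) (restr J y) else 0)"
  unfolding lift_op_def agree_off_def ..

lemma local_onD: "local_on J M \<Longrightarrow> M x y = (if agree_off J x y then M (restr J x) (restr J y) else 0)"
  unfolding local_on_def by (metis lift_op_apply)

lemma local_onI: "(\<And>x y. M x y = (if agree_off J x y then M (restr J x) (restr J y) else 0)) \<Longrightarrow> local_on J M"
  unfolding local_on_def by (intro ext) (simp add: lift_op_apply)

lemma restr_restr [simp]: "restr J (restr J x) = restr J x"
  unfolding restr_def by auto

lemma agree_off_restr [simp]: "agree_off J (restr J x) (restr J y)"
  unfolding agree_off_def restr_def by simp

lemma sum_agree_off:
  fixes g :: "('n::finite \<Rightarrow> 'q::{finite,zero}) \<Rightarrow> complex"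
  shows "(\<Sum>z\<in>{z. agree_off J x z}. g (restr J z)) = (\<Sum>w\<in>{w. \<forall>j. j \<notin> J \<longrightarrow> w j = 0}. g w)"
  by (rule sum.reindex_bij_witness[where i = "\<lambda>w j. if j \<in> J then w j else x j" and j = "restr J"])
    (auto simp: agree_off_def restr_def fun_eq_iff)

lemma mmul_local_on_apply:
  fixes M N :: "('n::finite, 'q::{finite,zero}) qmat"
  assumes M: "local_on J M" and N: "local_on J N"
  shows "mmul M N u v = (if agree_off J u v
    then \<Sum>w\<in>{w. \<forall>j. j \<notin> J \<longrightarrow> w j = 0}. M (restr J u) w * N w (restr J v) else 0)"
proof -
  define g where "g w = M (restr J u) w * N w (restr J v)" for w
  have "mmul M N u v = (\<Sum>z\<in>UNIV. if agree_off J u z \<and> agree_off J z v then g (restr J z) else 0)"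
    unfolding mmul_def g_def
    by (intro sum.cong refl, subst local_onD[OF M], subst local_onD[OF N]) simp
  also have "\<dots> = (if agree_off J u v then \<Sum>z\<in>{z. agree_off J u z}. g (restr J z) else 0)"
  proof (cases "agree_off J u v")
    case True
    then have "agree_off J u z \<and> agree_off J z v \<longleftrightarrow> agree_off J u z" for z
      unfolding agree_off_def by auto
    with True show ?thesis
      by (simp add: sum.If_cases)
  next
    case False
    then have "(if agree_off J u z \<and> agree_off J z v then g (restr J z) else 0) = 0" for z
      unfolding agree_off_def by metis
    with False show ?thesis
      by simp
  qed
  also have "\<dots> = (if agree_off J u v then \<Sum>w\<in>{w. \<forall>j. j \<notin> J \<longrightarrow> w j = 0}. g w else 0)"
    by (simp only: sum_agree_off)
  finally show ?thesis
    unfolding g_def .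
qed

lemma local_on_mmul:
  fixes M N :: "('n::finite, 'q::{finite,zero}) qmat"
  shows "local_on J M \<Longrightarrow> local_on J N \<Longrightarrow> local_on J (mmul M N)"
  by (rule local_onI) (simp add: mmul_local_on_apply)

lemma local_on_mscale: "local_on J M \<Longrightarrow> local_on J (mscale c M)"
  unfolding mscale_def by (rule local_onI) (subst local_onD[of J M], assumption, simp)

lemma local_on_msum: "(\<And>i. i \<in> S \<Longrightarrow> local_on J (f i)) \<Longrightarrow> local_on J (msum S f)"
proof (rule local_onI)
  fix x y
  assume "\<And>i. i \<in> S \<Longrightarrow> local_on J (f i)"
  then have "f i x y = (if agree_off J x y then f i (restr J x) (restr J y) else 0)" if "i \<in> S" for i
    using local_onD that by blast
  then show "msum S f x y = (if agree_off J x y then msum S f (restr J x) (restr J y) else 0)"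
    unfolding msum_def by (auto intro!: sum.cong sum.neutral)
qed

lemma local_on_mdiff: "local_on J A \<Longrightarrow> local_on J B \<Longrightarrow> local_on J (mdiff A B)"
  unfolding mdiff_def
  by (rule local_onI) (subst local_onD[of J A], assumption, subst local_onD[of J B], assumption, simp)

lemma local_on_madj: "local_on J M \<Longrightarrow> local_on J (madj M)"
  unfolding madj_def
  by (rule local_onI) (subst local_onD[of J M], assumption, auto simp: agree_off_def)

lemma local_on_pauliE:
  assumes "ssupp y \<subseteq> J"
  shows "local_on J (pauliE (y :: ('n::finite, 'q::{finite,field}) svec))"
proof (rule local_onI)
  fix x' x :: "'n \<Rightarrow> 'q"
  have z: "\<And>j. j \<notin> J \<Longrightarrow> fst y j = 0 \<and> snd y j = 0"
    using assms unfolding ssupp_subset_iff by auto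
  have "dot (snd y) (restr J x) = dot (snd y) x"
    unfolding dot_def restr_def by (intro sum.cong) (auto simp: z)
  moreover have "x' = (\<lambda>j. x j + fst y j) \<longleftrightarrow>
      agree_off J x' x \<and> restr J x' = (\<lambda>j. restr J x j + fst y j)"
  proof
    assume "agree_off J x' x \<and> restr J x' = (\<lambda>j. restr J x j + fst y j)"
    then have "x' j = x j + fst y j" for j
      using z[of j] by (cases "j \<in> J") (auto simp: agree_off_def restr_def fun_eq_iff dest: spec[of _ j])
    then show "x' = (\<lambda>j. x j + fst y j)" ..
  qed (auto simp: agree_off_def restr_def fun_eq_iff z)
  ultimately show "pauliE y x' x = (if agree_off J x' x then pauliE y (restr J x') (restr J x) else 0)"
    unfolding pauliE_apply by auto
qed

lemma local_on_mid: "local_on J (mid :: ('n::finite, 'q::{finite,field}) qmat)"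
proof -
  have "ssupp (szero :: ('n, 'q) svec) \<subseteq> J"
    by (simp add: ssupp_def szero_def)
  then show ?thesis
    using local_on_pauliE[of szero J] by simp
qed

lemma lift_op_pauliE_commute:
  assumes "ssupp y \<inter> J = {}"
  shows "mmul (lift_op J A) (pauliE (y :: ('n::finite, 'q::{finite,field}) svec)) = mmul (pauliE y) (lift_op J A)"
proof (intro ext)
  fix x' x :: "'n \<Rightarrow> 'q"
  define t where "t = (\<lambda>j. x j + fst y j)"
  define s where "s = (\<lambda>j. x' j - fst y j)"
  have z: "\<And>j. j \<in> J \<Longrightarrow> fst y j = 0 \<and> snd y j = 0"
    using assms unfolding ssupp_def by auto
  then have "restr J t = restr J x" "restr J s = restr J x'"
    unfolding t_def s_def restr_def by (auto simp: fun_eq_iff)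
  moreover have "agree_off J x' t \<longleftrightarrow> agree_off J s x"
    unfolding agree_off_def t_def s_def by (auto simp: algebra_simps)
  moreover have "dot (snd y) s = dot (snd y) x" if "agree_off J s x"
    unfolding dot_def using that z by (intro sum.cong) (auto simp: agree_off_def)
  ultimately show "mmul (lift_op J A) (pauliE y) x' x = mmul (pauliE y) (lift_op J A) x' x"
    unfolding mmul_pauliE_right_apply mmul_pauliE_left_apply lift_op_apply t_def[symmetric] s_def[symmetric]
    by (auto simp: mult.commute)
qed

lemma kraus_map_Nil: "kraus_map J [] rho = mzero"
  unfolding kraus_map_def mzero_def by simp

lemma kraus_map_Cons: "kraus_map J (A # As) rho = madd (sandwich (lift_op J A) rho) (kraus_map J As rho)"
  unfolding kraus_map_def madd_def sandwich_def by simp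

lemma kraus_map_sandwich_outside:
  assumes "ssupp b \<inter> J = {}"
  shows "kraus_map J As (sandwich (pauliE b) rho) = sandwich (pauliE b) (kraus_map J As rho)"
proof (induction As)
  case Nil
  then show ?case
    by (simp add: kraus_map_Nil sandwich_mzero)
next
  case (Cons A As)
  have "sandwich (lift_op J A) (sandwich (pauliE b) rho) = sandwich (pauliE b) (sandwich (lift_op J A) rho)"
    unfolding sandwich_mmul[symmetric] lift_op_pauliE_commute[OF assms] ..
  then show ?case
    by (simp add: kraus_map_Cons Cons sandwich_madd)
qed

lemma Gamma_eq_msum:
  "Gamma I rho = mscale (1 / of_nat (card (supported I :: ('n::finite, 'q::{finite,field}) svec set)))
      (msum (supported I) (\<lambda>e. sandwich (pauliE e) (rho :: ('n, 'q) qmat)))"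
  unfolding Gamma_def msum_def sandwich_def supported_def card_supported[symmetric, unfolded supported_def] ..

lemma mtrace_Gamma: "mtrace (Gamma I (rho :: ('n::finite, 'q::{finite,field}) qmat)) = mtrace rho"
proof -
  have "mtrace (msum (supported I) (\<lambda>e. sandwich (pauliE e) rho))
      = of_nat (card (supported I :: ('n, 'q) svec set)) * mtrace rho"
    unfolding mtrace_msum mtrace_sandwich pauliE_unitary by simp
  moreover have "supported I \<noteq> ({} :: ('n, 'q) svec set)"
    by (rule linear_code_nonempty[OF linear_code_supported])
  ultimately show ?thesis
    unfolding Gamma_eq_msum mtrace_mscale by simp
qed

lemma Gamma_sandwich_inside:
  fixes g :: "('n::finite, 'q::{finite,field}) svec"
  assumes "ssupp g \<subseteq> I"
  shows "Gamma I (sandwich (pauliE g) rho) = Gamma I rho"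
proof -
  have g: "g \<in> supported I"
    using assms by (simp add: supported_def)
  have "msum (supported I) (\<lambda>e. sandwich (pauliE e) (sandwich (pauliE g) rho))
      = msum (supported I) (\<lambda>e. sandwich (pauliE (sadd e g)) rho)"
    by (rule msum_cong) (simp add: sandwich_mmul[symmetric] pauliE_mult sandwich_mscale_left)
  also have "\<dots> = msum (supported I) (\<lambda>e. sandwich (pauliE e) rho)"
    by (rule msum_reindex_bij[symmetric], rule bij_betw_byWitness[where f' = "\<lambda>e. sadd e (sneg g)"])
      (use g in \<open>auto simp: linear_codeD[OF linear_code_supported] sadd_assoc\<close>)
  finally show ?thesis
    unfolding Gamma_eq_msum by simp
qed

lemma Gamma_sandwich_outside:
  fixes b :: "('n::finite, 'q::{finite,field}) svec"
  assumes "ssupp b \<inter> I = {}"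
  shows "Gamma I (sandwich (pauliE b) rho) = sandwich (pauliE b) (Gamma I rho)"
proof -
  have "sandwich (pauliE e) (sandwich (pauliE b) rho) = sandwich (pauliE b) (sandwich (pauliE e) rho)"
    if "e \<in> supported I" for e
  proof -
    have "symp b e = 0"
      using assms that by (intro symp_disjoint) (auto simp: supported_def)
    then show ?thesis
      unfolding sandwich_mmul[symmetric] pauliE_commute[of e b] by simp
  qed
  then show ?thesis
    unfolding Gamma_eq_msum sandwich_mscale_right sandwich_msum by (simp cong: msum_cong)
qed

section \<open>Necessity of the shortening condition\<close>

lemma polarization_identity:
  fixes p1 p2 q1 q2 r1 r2 s1 s2 :: complex
  assumes "p1 * cnj p2 = r1 * cnj r2" and "q1 * cnj q2 = s1 * cnj s2"
    and "(p1 + q1) * cnj (p2 + q2) = (r1 + s1) * cnj (r2 + s2)"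
    and "(p1 + \<i> * q1) * cnj (p2 + \<i> * q2) = (r1 + \<i> * s1) * cnj (r2 + \<i> * s2)"
  shows "p1 * cnj q2 = r1 * cnj s2"
proof -
  have "p1 * cnj q2 + q1 * cnj p2 = r1 * cnj s2 + s1 * cnj r2"
    using assms(1-3) by (simp add: algebra_simps)
  moreover have "\<i> * (q1 * cnj p2 - p1 * cnj q2) = \<i> * (s1 * cnj r2 - r1 * cnj s2)"
    using assms(1,2,4) by (simp add: algebra_simps)
  then have "q1 * cnj p2 - p1 * cnj q2 = s1 * cnj r2 - r1 * cnj s2"
    by simp
  ultimately have "(p1 * cnj q2 + q1 * cnj p2) - (q1 * cnj p2 - p1 * cnj q2)
      = (r1 * cnj s2 + s1 * cnj r2) - (s1 * cnj r2 - r1 * cnj s2)"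
    by simp
  then show ?thesis
    by (simp add: algebra_simps)
qed

lemma ketbra_preserving_imp_scalar:
  fixes M :: "('n::finite, 'q::finite) qmat" and Q :: "('n, 'q) qvec set"
  assumes lin: "\<And>u v a b. u \<in> Q \<Longrightarrow> v \<in> Q \<Longrightarrow> (\<lambda>x. a * u x + b * v x) \<in> Q"
    and iso: "\<And>u. u \<in> Q \<Longrightarrow> ketbra (mapply M u) = ketbra u"
    and psi: "psi \<in> Q" "psi y0 \<noteq> 0"
  shows "\<exists>mu. mu \<noteq> 0 \<and> (\<forall>u\<in>Q. mapply M u = (\<lambda>x. mu * u x))"
proof -
  have entry: "mapply M w x * cnj (mapply M w y) = w x * cnj (w y)" if "w \<in> Q" for w x y
    using fun_cong[OF fun_cong[OF iso[OF that], of x], of y] unfolding ketbra_def by simp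
  define b where "b = mapply M psi"
  have "b y0 \<noteq> 0"
    using entry[OF psi(1), of y0 y0] psi(2) by (auto simp: b_def)
  define mu where "mu = cnj (psi y0) / cnj (b y0)"
  have "mapply M u x = mu * u x" if u: "u \<in> Q" for u x
  proof -
    define a where "a = mapply M u"
    have "a x * cnj (b y0) = u x * cnj (psi y0)"
    proof (rule polarization_identity)
      show "a x * cnj (a y0) = u x * cnj (u y0)" "b x * cnj (b y0) = psi x * cnj (psi y0)"
        using entry[OF u] entry[OF psi(1)] by (simp_all add: a_def b_def)
      show "(a x + b x) * cnj (a y0 + b y0) = (u x + psi x) * cnj (u y0 + psi y0)"
        using entry[OF lin[OF u psi(1), of 1 1]] mapply_linear[of M 1 u 1 psi] by (simp add: a_def b_def)
      show "(a x + \<i> * b x) * cnj (a y0 + \<i> * b y0) = (u x + \<i> * psi x) * cnj (u y0 + \<i> * psi y0)"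
        using entry[OF lin[OF u psi(1), of 1 \<i>]] mapply_linear[of M 1 u \<i> psi] by (simp add: a_def b_def)
    qed
    with \<open>b y0 \<noteq> 0\<close> show ?thesis
      by (simp add: a_def mu_def field_simps)
  qed
  moreover have "mu \<noteq> 0"
    unfolding mu_def using psi(2) \<open>b y0 \<noteq> 0\<close> by simp
  ultimately show ?thesis
    by blast
qed

context stabilizer_code
begin

lemma mapply_pauliE_sdual_mem:
  assumes y: "y \<in> sdual C" and phi: "phi \<in> stab_code C lam"
  shows "mapply (pauliE y) phi \<in> stab_code C lam"
  unfolding stab_code_iff
proof
  fix c assume c: "c \<in> C"
  have "symp y c = 0"
    using y c unfolding sdual_def by auto
  then have "mapply (pauliE c) (mapply (pauliE y) phi) = mapply (pauliE y) (mapply (pauliE c) phi)"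
    unfolding mapply_mmul[symmetric] pauliE_commute[of c y] by simp
  also have "\<dots> = (\<lambda>x. eigval c * mapply (pauliE y) phi x)"
    using phi c unfolding stab_code_iff by (simp add: mapply_scale)
  finally show "mapply (pauliE c) (mapply (pauliE y) phi) = (\<lambda>x. eigval c * mapply (pauliE y) phi x)" .
qed

lemma column_code_proj_mem: "(\<lambda>x. code_proj C x y) \<in> stab_code C lam"
  unfolding stab_code_iff
proof
  fix c assume c: "c \<in> C"
  have "pauliE c = mscale (eigval c) (stab_op c)"
    unfolding stab_op_def mscale_mscale using eigval_nonzero[OF c] by simp
  then have "mmul (pauliE c) (code_proj C) = mscale (eigval c) (code_proj C)"
    by (simp add: mmul_mscale_left stab_op_code_proj[OF linear subset_refl c])
  then show "mapply (pauliE c) (\<lambda>x. code_proj C x y) = (\<lambda>x. eigval c * code_proj C x y)"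
    unfolding mapply_column by (simp add: mscale_def)
qed

lemma mtrace_code_proj_nonzero: "mtrace (code_proj C) \<noteq> 0"
  using mtrace_code_proj[OF linear subset_refl] linear_code_nonempty[OF linear] by simp

lemma code_proj_diagonal_nonzero: "\<exists>y0. code_proj C y0 y0 \<noteq> 0"
proof (rule ccontr)
  assume "\<nexists>y0. code_proj C y0 y0 \<noteq> 0"
  then have "mtrace (code_proj C) = 0"
    unfolding mtrace_def by simp
  with mtrace_code_proj_nonzero show False ..
qed

text \<open>If g is not in C, then pauliE g has trace zero against every stab_op c, hence against the
  code projection, whose trace is nonzero.\<close>

lemma pauliE_scalar_on_code_imp_mem:
  assumes mu: "mu \<noteq> 0" and act: "\<forall>u\<in>stab_code C lam. mapply (pauliE g) u = (\<lambda>x. mu * u x)"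
  shows "g \<in> C"
proof (rule ccontr)
  assume g: "g \<notin> C"
  have "mmul (pauliE g) (code_proj C) x y = mscale mu (code_proj C) x y" for x y
  proof -
    have "mapply (pauliE g) (\<lambda>x. code_proj C x y) = (\<lambda>x. mu * code_proj C x y)"
      using act column_code_proj_mem by blast
    then show ?thesis
      unfolding mapply_column by (simp add: mscale_def fun_eq_iff)
  qed
  then have "mtrace (mmul (pauliE g) (code_proj C)) = mu * mtrace (code_proj C)"
    by (simp add: mtrace_def mscale_def sum_distrib_left)
  moreover have "mtrace (mmul (pauliE g) (stab_op c)) = 0" if c: "c \<in> C" for c
  proof -
    have "sadd g c \<noteq> szero"
      using g linear_codeD(4)[OF linear c] by (auto simp: sadd_eq_szero_iff)
    then show ?thesis
      unfolding stab_op_def mmul_mscale_right pauliE_mult mtrace_mscale mtrace_pauliE by simp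
  qed
  then have "mtrace (mmul (pauliE g) (code_proj C)) = 0"
    unfolding code_proj_def mmul_mscale_right mmul_msum_right mtrace_mscale mtrace_msum by simp
  ultimately show False
    using mu mtrace_code_proj_nonzero by simp
qed

context
  fixes I J :: "'n set" and As
  assumes I_subset_J: "I \<subseteq> J"
    and recovers: "\<forall>\<phi>\<in>stab_code C lam. kraus_map J As (Gamma I (ketbra \<phi>)) = ketbra \<phi>"
begin

text \<open>Split y into its parts on I and outside J. The channel absorbs the error on I and the
  recovery commutes with the part outside J, while pauliE y maps the code space into itself;
  hence pauliE (proj I y) preserves every projection onto a code vector.\<close>

lemma ketbra_pauliE_proj_eq:
  assumes y: "y \<in> sdual C" and y_vanish: "\<forall>j\<in>J - I. fst y j = 0 \<and> snd y j = 0"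
    and u: "u \<in> stab_code C lam"
  shows "ketbra (mapply (pauliE (proj I y)) u) = ketbra u"
proof -
  define yI where "yI = proj I y"
  define yB where "yB = proj (- J) y"
  have sI: "ssupp yI \<subseteq> I"
    unfolding yI_def by (rule ssupp_proj)
  have sB: "ssupp yB \<inter> J = {}" "ssupp yB \<inter> I = {}"
    using ssupp_proj[of "- J" y] I_subset_J unfolding yB_def by auto
  have "sadd yB yI = y"
    using y_vanish I_subset_J by (auto simp: yI_def yB_def sadd_def fst_proj snd_proj prod_eq_iff fun_eq_iff)
  moreover have "dot (snd yB) (fst yI) = 0"
    unfolding yI_def yB_def fst_proj snd_proj using I_subset_J by (intro dot_disjoint) auto
  ultimately have Ey: "pauliE y = mmul (pauliE yB) (pauliE yI)"
    by (simp add: pauliE_mult)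
  have "sandwich (pauliE yB) (ketbra (mapply (pauliE yI) u)) = ketbra (mapply (pauliE y) u)"
    unfolding sandwich_ketbra Ey mapply_mmul ..
  also have "\<dots> = kraus_map J As (Gamma I (sandwich (pauliE yB) (sandwich (pauliE yI) (ketbra u))))"
    using recovers mapply_pauliE_sdual_mem[OF y u] unfolding sandwich_ketbra Ey mapply_mmul by simp
  also have "\<dots> = sandwich (pauliE yB) (ketbra u)"
    using recovers u
    by (simp add: Gamma_sandwich_outside[OF sB(2)] kraus_map_sandwich_outside[OF sB(1)] Gamma_sandwich_inside[OF sI])
  finally have "sandwich (madj (pauliE yB)) (sandwich (pauliE yB) (ketbra (mapply (pauliE yI) u)))
      = sandwich (madj (pauliE yB)) (sandwich (pauliE yB) (ketbra u))"
    by simp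
  then show ?thesis
    unfolding sandwich_pauliE_inverse yI_def .
qed

lemma proj_sdual_mem:
  assumes y: "y \<in> sdual C" and y_vanish: "\<forall>j\<in>J - I. fst y j = 0 \<and> snd y j = 0"
  shows "proj I y \<in> C"
proof -
  obtain y0 where "code_proj C y0 y0 \<noteq> 0"
    using code_proj_diagonal_nonzero by blast
  then obtain mu where "mu \<noteq> 0" "\<forall>u\<in>stab_code C lam. mapply (pauliE (proj I y)) u = (\<lambda>x. mu * u x)"
    using ketbra_preserving_imp_scalar[OF stab_code_linear ketbra_pauliE_proj_eq[OF y y_vanish]
        column_code_proj_mem]
    by blast
  then show ?thesis
    by (rule pauliE_scalar_on_code_imp_mem)
qed

end

lemma sdual_on_subset_if_recoverable:
  assumes I_subset_J: "I \<subseteq> J" and "locally_recoverable I J (stab_code C lam)"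
  shows "sdual_on I (C \<inter> supported J) \<subseteq> C"
proof
  fix g assume g: "g \<in> sdual_on I (C \<inter> supported J)"
  obtain As where recovers: "\<forall>\<phi>\<in>stab_code C lam. kraus_map J As (Gamma I (ketbra \<phi>)) = ketbra \<phi>"
    using assms(2) unfolding locally_recoverable_def by blast
  have "g \<in> sdual_on J (C \<inter> supported J)"
    using sdual_on_mono[OF I_subset_J] g ..
  then have "g \<in> puncture J (sdual C)"
    unfolding puncture_sdual[OF linear] .
  then obtain y where y: "y \<in> sdual C" "g = proj J y"
    unfolding puncture_def by blast
  have "ssupp g \<subseteq> I"
    using g by (simp add: sdual_on_def supported_def)
  then have "\<forall>j\<in>J - I. fst y j = 0 \<and> snd y j = 0" "proj I y = g"
    using I_subset_J unfolding y(2) by (auto simp: ssupp_subset_iff proj_def prod_eq_iff fun_eq_iff)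
  with proj_sdual_mem[OF I_subset_J recovers y(1)] show "g \<in> C"
    by simp
qed

end

section \<open>An explicit local recovery\<close>

context stabilizer_code
begin

lemma local_on_code_proj: "D \<subseteq> supported J \<Longrightarrow> local_on J (code_proj D)"
  unfolding code_proj_def stab_op_def
  by (intro local_on_mscale local_on_msum local_on_pauliE) (auto simp: supported_def)

context
  fixes I J :: "'n set"
  assumes I_subset_J: "I \<subseteq> J"
    and cleanable: "sdual_on I (C \<inter> supported J) \<subseteq> C"
begin

text \<open>The Kraus operators of the recovery: recovery_op e undoes an error e on I and projects
  onto the code of the stabilizers supported in J, scaled so that together with
  failure_op = 1 - P (J - I) they resolve the identity; failure_op annihilates every code state
  hit by an error on I, since such states are still fixed by the stabilizers supported in J - I.\<close>

definition "CJ = C \<inter> supported J"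
definition "CJI = C \<inter> supported (J - I)"
definition "kraus_scale = sqrt (real (card CJ) / (real (card (supported I :: ('n, 'q) svec set)) * real (card CJI)))"
definition "recovery_op e = mscale (complex_of_real kraus_scale) (mmul (code_proj CJ) (madj (pauliE e)))"
definition "failure_op = mdiff mid (code_proj CJI)"

lemma linear_CJ: "linear_code CJ"
  and linear_CJI: "linear_code CJI"
  unfolding CJ_def CJI_def by (rule linear_code_Int[OF linear linear_code_supported])+

lemma CJ_subset: "CJ \<subseteq> C"
  and CJI_subset: "CJI \<subseteq> C"
  unfolding CJ_def CJI_def by auto

lemma code_proj_CJ_idem: "mmul (code_proj CJ) (code_proj CJ) = code_proj CJ"
  and madj_code_proj_CJ: "madj (code_proj CJ) = code_proj CJ"
  and code_proj_CJI_idem: "mmul (code_proj CJI) (code_proj CJI) = code_proj CJI"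
  and madj_code_proj_CJI: "madj (code_proj CJI) = code_proj CJI"
  using code_proj_idem[OF linear_CJ CJ_subset] madj_code_proj[OF linear_CJ CJ_subset]
    code_proj_idem[OF linear_CJI CJI_subset] madj_code_proj[OF linear_CJI CJI_subset] .

lemma local_on_recovery_op: "e \<in> supported I \<Longrightarrow> local_on J (recovery_op e)"
  unfolding recovery_op_def using I_subset_J
  by (intro local_on_mscale local_on_mmul local_on_code_proj local_on_madj local_on_pauliE)
    (auto simp: CJ_def supported_def)

lemma local_on_failure_op: "local_on J failure_op"
  unfolding failure_op_def
  by (intro local_on_mdiff local_on_mid local_on_code_proj) (auto simp: CJI_def supported_def)

lemma madj_recovery_op_mmul:
  "mmul (madj (recovery_op e)) (recovery_op e)
    = mscale (complex_of_real (kraus_scale\<^sup>2)) (sandwich (pauliE e) (code_proj CJ))"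
proof -
  have "mmul (mmul (pauliE e) (code_proj CJ)) (mmul (code_proj CJ) (madj (pauliE e)))
      = mmul (mmul (pauliE e) (mmul (code_proj CJ) (code_proj CJ))) (madj (pauliE e))"
    by (simp only: mmul_assoc)
  then have "mmul (mmul (pauliE e) (madj (code_proj CJ))) (mmul (code_proj CJ) (madj (pauliE e)))
      = sandwich (pauliE e) (code_proj CJ)"
    unfolding sandwich_def madj_code_proj_CJ code_proj_CJ_idem .
  then show ?thesis
    unfolding recovery_op_def madj_mscale madj_mmul
    by (simp add: mmul_mscale_left mmul_mscale_right mscale_mscale power2_eq_square)
qed

lemma orthogonal_supported_I_iff:
  assumes "c \<in> CJ"
  shows "(\<forall>e\<in>supported I. symp c e = 0) \<longleftrightarrow> c \<in> CJI"
  using assms unfolding symp_supported_eq_0_iff CJ_def CJI_def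
  by (auto simp: supported_def ssupp_subset_iff)

text \<open>Averaging over the errors on I kills the stabilizers of CJ that do not commute with all
  of them, which are exactly those outside CJI.\<close>

lemma msum_sandwich_code_proj_CJ:
  "msum (supported I) (\<lambda>e. sandwich (pauliE e) (code_proj CJ))
    = mscale (of_nat (card (supported I :: ('n, 'q) svec set)) * of_nat (card CJI) / of_nat (card CJ))
        (code_proj CJI)"
proof -
  define NI where "NI = card (supported I :: ('n, 'q) svec set)"
  have "msum (supported I) (\<lambda>e. sandwich (pauliE e) (code_proj CJ))
      = mscale (1 / of_nat (card CJ)) (msum CJ (\<lambda>c. mscale (\<Sum>e\<in>supported I. chi (symp c e)) (stab_op c)))"
    unfolding code_proj_def sandwich_mscale_right sandwich_msum sandwich_pauliE_stab_op
      mscale_msum[symmetric] msum_swap[of _ CJ] msum_mscale ..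
  also have "msum CJ (\<lambda>c. mscale (\<Sum>e\<in>supported I. chi (symp c e)) (stab_op c))
      = msum CJI (\<lambda>c. mscale (of_nat NI) (stab_op c))"
  proof -
    have "(\<Sum>c\<in>CJ. mscale (\<Sum>e\<in>supported I. chi (symp c e)) (stab_op c) x y)
        = (\<Sum>c\<in>CJI. mscale (of_nat NI) (stab_op c) x y)" for x y
    proof (rule sum.mono_neutral_cong_right)
      show "CJI \<subseteq> CJ"
        by (auto simp: CJ_def CJI_def supported_def)
      show "\<forall>c\<in>CJ - CJI. mscale (\<Sum>e\<in>supported I. chi (symp c e)) (stab_op c) x y = 0"
        using orthogonal_supported_I_iff
        by (simp add: sum_chi_symp_linear_code[OF linear_code_supported] mscale_def)
      show "mscale (\<Sum>e\<in>supported I. chi (symp c e)) (stab_op c) x y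
          = mscale (of_nat NI) (stab_op c) x y" if "c \<in> CJI" for c
      proof -
        have "\<forall>e\<in>supported I. symp c e = 0"
          using orthogonal_supported_I_iff[of c] that \<open>CJI \<subseteq> CJ\<close> by blast
        then show ?thesis
          by (simp add: sum_chi_symp_linear_code[OF linear_code_supported] NI_def)
      qed
    qed simp
    then show ?thesis
      unfolding msum_def by simp
  qed
  also have "\<dots> = mscale (of_nat NI * of_nat (card CJI)) (code_proj CJI)"
    unfolding mscale_msum[symmetric] msum_stab_op[OF linear_CJI] mscale_mscale ..
  finally show ?thesis
    by (simp add: mscale_mscale NI_def)
qed

lemma kraus_scale_sq:
  "complex_of_real (kraus_scale\<^sup>2)
    * (of_nat (card (supported I :: ('n, 'q) svec set)) * of_nat (card CJI) / of_nat (card CJ)) = 1"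
proof -
  have ne: "CJ \<noteq> {}" "CJI \<noteq> {}" "supported I \<noteq> ({} :: ('n, 'q) svec set)"
    using linear_code_nonempty linear_CJ linear_CJI linear_code_supported by blast+
  then have pos: "card CJ > 0" "card CJI > 0" "card (supported I :: ('n, 'q) svec set) > 0"
    by (simp_all add: card_gt_0_iff)
  have "kraus_scale\<^sup>2 = real (card CJ) / (real (card (supported I :: ('n, 'q) svec set)) * real (card CJI))"
    unfolding kraus_scale_def by (rule real_sqrt_pow2) simp
  then have "complex_of_real (kraus_scale\<^sup>2)
      = of_nat (card CJ) / (of_nat (card (supported I :: ('n, 'q) svec set)) * of_nat (card CJI))"
    by simp
  then show ?thesis
    using pos ne by (simp add: field_simps)
qed

lemma madj_failure_op_mmul: "mmul (madj failure_op) failure_op = failure_op"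
proof -
  have "mmul (madj failure_op) failure_op
      = mdiff (mdiff mid (code_proj CJI)) (mdiff (code_proj CJI) (mmul (code_proj CJI) (code_proj CJI)))"
    unfolding failure_op_def madj_mdiff madj_code_proj_CJI by (simp add: mmul_mdiff_left mmul_mdiff_right)
  then show ?thesis
    unfolding code_proj_CJI_idem failure_op_def by (simp add: mdiff_def)
qed

lemma kraus_completeness:
  "madd (msum (supported I) (\<lambda>e. mmul (madj (recovery_op e)) (recovery_op e)))
     (mmul (madj failure_op) failure_op) = mid"
proof -
  have "msum (supported I) (\<lambda>e. mmul (madj (recovery_op e)) (recovery_op e)) = code_proj CJI"
    unfolding madj_recovery_op_mmul mscale_msum[symmetric] msum_sandwich_code_proj_CJ mscale_mscale
      kraus_scale_sq by simp
  then show ?thesis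
    unfolding madj_failure_op_mmul by (simp add: failure_op_def madd_def mdiff_def)
qed

lemma kraus_map_recovery:
  assumes es: "set es = supported I" "distinct es"
  shows "kraus_map J (map recovery_op es @ [failure_op]) rho
    = madd (msum (supported I) (\<lambda>e. sandwich (recovery_op e) rho)) (sandwich failure_op rho)"
proof -
  have "kraus_map J (map recovery_op es @ [failure_op]) rho x y
      = (\<Sum>e\<in>supported I. sandwich (recovery_op e) rho x y) + sandwich failure_op rho x y" for x y
  proof -
    have "kraus_map J (map recovery_op es @ [failure_op]) rho x y
        = (\<Sum>e\<leftarrow>es. sandwich (lift_op J (recovery_op e)) rho x y) + sandwich (lift_op J failure_op) rho x y"
      unfolding kraus_map_def sandwich_def by (simp add: comp_def)
    also have "\<dots> = (\<Sum>e\<in>supported I. sandwich (recovery_op e) rho x y) + sandwich failure_op rho x y"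
      using local_on_recovery_op local_on_failure_op
      by (simp add: es(1)[symmetric] sum_list_distinct_conv_sum_set[OF es(2)] local_on_def)
    finally show ?thesis .
  qed
  then show ?thesis
    unfolding madd_def msum_def by (intro ext)
qed

lemma mtrace_kraus_map_recovery:
  assumes "set es = supported I" "distinct es"
  shows "mtrace (kraus_map J (map recovery_op es @ [failure_op]) rho) = mtrace rho"
  unfolding kraus_map_recovery[OF assms] mtrace_madd mtrace_msum mtrace_sandwich
    mtrace_msum[symmetric] mtrace_madd[symmetric] mmul_msum_left[symmetric] mmul_madd_left[symmetric]
    kraus_completeness by simp

lemma code_proj_CJI_pauliE_commute:
  assumes "f \<in> supported I"
  shows "mmul (code_proj CJI) (pauliE f) = mmul (pauliE f) (code_proj CJI)"
proof -
  have "mmul (stab_op c) (pauliE f) = mmul (pauliE f) (stab_op c)" if "c \<in> CJI" for c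
  proof -
    have "symp f c = 0"
      using assms that by (intro symp_disjoint) (auto simp: supported_def CJI_def)
    then show ?thesis
      unfolding stab_op_def mmul_mscale_left mmul_mscale_right pauliE_commute[of c f] by simp
  qed
  then show ?thesis
    unfolding code_proj_def mmul_mscale_left mmul_mscale_right mmul_msum_left mmul_msum_right
    by (simp cong: msum_cong)
qed

lemma mapply_failure_op:
  assumes "f \<in> supported I" and "phi \<in> stab_code C lam"
  shows "mapply failure_op (mapply (pauliE f) phi) = (\<lambda>x. 0)"
proof -
  have "mapply (code_proj CJI) (mapply (pauliE f) phi) = mapply (pauliE f) (mapply (code_proj CJI) phi)"
    unfolding mapply_mmul[symmetric] code_proj_CJI_pauliE_commute[OF assms(1)] ..
  also have "mapply (code_proj CJI) phi = phi"
    by (rule mapply_code_proj[OF linear_CJI CJI_subset assms(2)])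
  finally show ?thesis
    unfolding failure_op_def mapply_mdiff by simp
qed

text \<open>An error on I that is not a stabilizer fails to commute, by a nontrivial character value,
  with some stabilizer supported in J; hence the projection onto the code of J kills it.\<close>

lemma mapply_code_proj_CJ_pauliE:
  assumes g: "g \<notin> C" "ssupp g \<subseteq> I" and phi: "phi \<in> stab_code C lam"
  shows "mapply (code_proj CJ) (mapply (pauliE g) phi) = (\<lambda>x. 0)"
proof -
  have "g \<notin> sdual_on I CJ"
    using g(1) cleanable unfolding CJ_def by blast
  then obtain c where c: "c \<in> CJ" "symp g c \<noteq> 0"
    using g(2) by (auto simp: sdual_on_def supported_def)
  obtain s where s: "chi (s * symp g c) \<noteq> 1"
    using chi_scaled_nontrivial[OF c(2)] by blast
  define c' where "c' = sscale s c"
  have c': "c' \<in> CJ" "c' \<in> C"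
    unfolding c'_def using linear_codeD(3)[OF linear_CJ c(1)] CJ_subset by auto
  define v where "v = mapply (code_proj CJ) (mapply (pauliE g) phi)"
  have commute: "mmul (stab_op c') (pauliE g) = mscale (chi (s * symp g c)) (mmul (pauliE g) (stab_op c'))"
    unfolding stab_op_def mmul_mscale_left mmul_mscale_right pauliE_commute[of c' g] mscale_mscale
    by (simp add: c'_def symp_sscale_right mult.commute)
  have "mapply (stab_op c') (mapply (pauliE g) phi) = mapply (mmul (stab_op c') (pauliE g)) phi"
    by (simp only: mapply_mmul)
  also have "\<dots> = (\<lambda>x. chi (s * symp g c) * mapply (pauliE g) (mapply (stab_op c') phi) x)"
    unfolding commute mapply_mscale mapply_mmul ..
  finally have "mapply (stab_op c') (mapply (pauliE g) phi) = (\<lambda>x. chi (s * symp g c) * mapply (pauliE g) phi x)"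
    unfolding mapply_stab_op[OF phi c'(2)] .
  then have "mapply (mmul (code_proj CJ) (stab_op c')) (mapply (pauliE g) phi) = (\<lambda>x. chi (s * symp g c) * v x)"
    unfolding mapply_mmul v_def by (simp add: mapply_scale)
  then have "v x = chi (s * symp g c) * v x" for x
    unfolding code_proj_stab_op[OF linear_CJ CJ_subset c'(1)] v_def by metis
  then have "(1 - chi (s * symp g c)) * v x = 0" for x
    by (simp add: algebra_simps)
  with s show ?thesis
    unfolding v_def[symmetric] by auto
qed

lemma mapply_recovery_op:
  assumes e: "e \<in> supported I" and f: "f \<in> supported I" and phi: "phi \<in> stab_code C lam"
  shows "\<exists>a. mapply (recovery_op e) (mapply (pauliE f) phi) = (\<lambda>x. a * phi x)"
proof -
  define g where "g = sadd (sneg e) f"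
  have g: "ssupp g \<subseteq> I"
    using linear_codeD(2)[OF linear_code_supported linear_codeD(4)[OF linear_code_supported e] f]
    by (simp add: g_def supported_def)
  obtain w where w: "mmul (madj (pauliE e)) (pauliE f) = mscale w (pauliE g)"
    unfolding madj_pauliE mmul_mscale_left pauliE_mult mscale_mscale g_def by blast
  obtain b where b: "mapply (code_proj CJ) (mapply (pauliE g) phi) = (\<lambda>x. b * phi x)"
  proof (cases "g \<in> C")
    case True
    then have "mapply (pauliE g) phi = (\<lambda>x. eigval g * phi x)"
      using phi unfolding stab_code_iff by blast
    then show ?thesis
      using that[of "eigval g"] by (simp add: mapply_scale mapply_code_proj[OF linear_CJ CJ_subset phi])
  next
    case False
    then show ?thesis
      using that[of 0] mapply_code_proj_CJ_pauliE[OF False g phi] by simp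
  qed
  have "mapply (recovery_op e) (mapply (pauliE f) phi) = (\<lambda>x. complex_of_real kraus_scale * w * b * phi x)"
    unfolding recovery_op_def mapply_mscale mapply_mmul mapply_mmul[symmetric, of "madj (pauliE e)"] w
    by (simp add: mapply_mscale mapply_scale b mult.assoc)
  then show ?thesis
    by blast
qed

lemma recovers_ketbra:
  assumes es: "set es = supported I" "distinct es" and phi: "phi \<in> stab_code C lam"
  shows "kraus_map J (map recovery_op es @ [failure_op]) (Gamma I (ketbra phi)) = ketbra phi"
proof -
  define N where "N = card (supported I :: ('n, 'q) svec set)"
  define a where "a e f = (SOME a. mapply (recovery_op e) (mapply (pauliE f) phi) = (\<lambda>x. a * phi x))" for e f
  have a: "mapply (recovery_op e) (mapply (pauliE f) phi) = (\<lambda>x. a e f * phi x)"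
    if "e \<in> supported I" "f \<in> supported I" for e f
    unfolding a_def using someI_ex[OF mapply_recovery_op[OF that phi]] .
  have Gamma: "Gamma I (ketbra phi) = mscale (1 / of_nat N) (msum (supported I) (\<lambda>f. ketbra (mapply (pauliE f) phi)))"
    unfolding Gamma_eq_msum N_def sandwich_ketbra ..
  have "sandwich (recovery_op e) (Gamma I (ketbra phi))
      = mscale (1 / of_nat N * (\<Sum>f\<in>supported I. a e f * cnj (a e f))) (ketbra phi)"
    if "e \<in> supported I" for e
    unfolding Gamma sandwich_mscale_right sandwich_msum sandwich_ketbra
    using that by (simp add: a ketbra_scale msum_mscale mscale_mscale cong: msum_cong)
  moreover have "sandwich failure_op (Gamma I (ketbra phi)) = mzero"
    unfolding Gamma sandwich_mscale_right sandwich_msum sandwich_ketbra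
    by (simp add: mapply_failure_op[OF _ phi] ketbra_zero msum_mzero mscale_mzero cong: msum_cong)
  ultimately obtain mu where K: "kraus_map J (map recovery_op es @ [failure_op]) (Gamma I (ketbra phi))
      = mscale mu (ketbra phi)"
    unfolding kraus_map_recovery[OF es] by (simp add: madd_mzero msum_mscale cong: msum_cong)
  have "mu * mtrace (ketbra phi) = mtrace (ketbra phi)"
    using mtrace_kraus_map_recovery[OF es, of "Gamma I (ketbra phi)"] mtrace_Gamma[of I "ketbra phi"]
    unfolding K mtrace_mscale by simp
  then have "mu = 1 \<or> phi = (\<lambda>x. 0)"
    by (auto simp: mtrace_ketbra_eq_0_iff)
  then show ?thesis
    using K by (auto simp: ketbra_zero mscale_mzero)
qed

lemma locally_recoverable_stab_code: "locally_recoverable I J (stab_code C lam)"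
proof -
  obtain es :: "('n, 'q) svec list" where "set es = supported I" "distinct es"
    using finite_distinct_list[OF finite_svec] by blast
  then show ?thesis
    unfolding locally_recoverable_def
    using mtrace_kraus_map_recovery recovers_ketbra by blast
qed

end

end

theorem theorem18:
  fixes C :: "('n::finite, 'q::{finite,field}) svec set"
    and I J :: "'n set"
    and lam :: "('n, 'q) qmat \<Rightarrow> complex"
  assumes "linear_code C"
    and "symp_self_orth C"
    and "I \<noteq> {}" and "I \<subset> J"
    and "stab_character C lam"
  shows "locally_recoverable I J (stab_code C lam) \<longleftrightarrow>
         shorten I (puncture J (sdual C)) = shorten I C"
proof -
  interpret stabilizer_code C lam
    using assms(1,5) by unfold_locales
  have "I \<subseteq> J"
    using assms(4) by blast
  have "locally_recoverable I J (stab_code C lam) \<longleftrightarrow> sdual_on I (C \<inter> supported J) \<subseteq> C"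
    using sdual_on_subset_if_recoverable[OF \<open>I \<subseteq> J\<close>] locally_recoverable_stab_code[OF \<open>I \<subseteq> J\<close>] ..
  also have "\<dots> \<longleftrightarrow> shorten I (puncture J (sdual C)) = shorten I C"
    using shorten_puncture_sdual_eq_iff[OF assms(1,2) \<open>I \<subseteq> J\<close>] by simp
  finally show ?thesis .
qed

end
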